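(* Let $(\mathcal C,\amalg)$ be a monoidal supercategory satisfying (C1)–(C4) below, and for a two-sided ideal $J$ of $B_n$ let $\Sigma(J)$ denote the two-sided ideal of $B_{n+1}$ generated by $\iota_{1,n}(1\otimes J)$. Then for every $\lambda\in\Lambda(B_n)$, $$\Sigma(J^\lambda)=\bigoplus_{\mu\in\Lambda(B_{n+1}),\ \lambda\subset\mu}J^\mu.$$ Conditions: (C1) there is a bijection $\mathbb N\to\mathrm{Ob}(\mathcal C)$, $n\mapsto[n]$, with $[n]\amalg[m]=[n+m]$; (C2) $\mathrm{Hom}_{\mathcal C}([n],[m])=0$ for $n\ne m$; (C3) $B_n=\mathrm{End}_{\mathcal C}([n])$ is a finite dimensional semisimple superalgebra; (C4) there is a partial order $\subset$ on $\Lambda(\mathcal C)=\coprod_n\Lambda(B_n)$ such that for every $\lambda\in\Lambda(B_n)$, $[B_1]\cdot[S_\lambda]=\sum_{\mu\in\Lambda(B_{n+1}),\ \lambda\subset\mu}c_{\lambda,\mu}[S_\mu]$ in $\mathrm K(\mathcal C)$ with all $c_{\lambda,\mu}$ positive integers.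
   Context: A supercategory is a category enriched in super vector spaces; a monoidal supercategory has a monoidal product on all morphisms obeying the Koszul sign rule. A finite dimensional superalgebra $B$ is semisimple if the abelian category of $B$-modules with even morphisms is semisimple. $\Lambda(B)$ is the set of isomorphism classes of simple left $B$-modules (odd isomorphisms allowed), $S_\lambda$ a representative, and $J^\lambda\subset B$ the sum of all left ideals of $B$ isomorphic to $S_\lambda$ or its parity shift $S_\lambda[1]$. The maps $\iota_{m,n}\colon B_m\otimes B_n\to B_{m+n}$, $f\otimes g\mapsto f\amalg g$, are superalgebra homomorphisms. $\mathrm K(B)$ is the Grothendieck group of finite length $B$-modules modulo $[M]=[M[1]]$; $\mathrm K(\mathcal C)=\bigoplus_n\mathrm K(B_n)$ with product $[M]\cdot[N]=[B_{m+n}\otimes_{B_m\otimes B_n}(M\otimes N)]$ (induction along $\iota_{m,n}$). *)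

theory Defs
  imports Complex_Main
begin

text \<open>
  A (strict) monoidal supercategory satisfying (C1),(C2): objects are [n], n in nat, with
  [n] amalg [m] = [n+m] and Hom([n],[m]) = 0 for n differing from m.  Such a category is
  encoded by the family of endomorphism superalgebras B_n = End([n]), all living inside one
  ambient k-vector space of type 'a (their direct sum), together with the composition
  (cmp), identities (idn n = 1_[n]), the parity decomposition (ev / od) and the monoidal
  product on morphisms (amg).
\<close>

record ('k, 'a) msc =
  sc  :: "'k \<Rightarrow> 'a \<Rightarrow> 'a"
  ev  :: "'a set"
  od  :: "'a set"
  hom :: "nat \<Rightarrow> 'a set"          \<comment> \<open>hom n = B_n = End([n])\<close>
  cmp :: "'a \<Rightarrow> 'a \<Rightarrow> 'a"
  idn :: "nat \<Rightarrow> 'a"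
  amg :: "'a \<Rightarrow> 'a \<Rightarrow> 'a"

definition homog :: "('k, 'a::ab_group_add, 'z) msc_scheme \<Rightarrow> 'a \<Rightarrow> bool" where
  "homog C x \<longleftrightarrow> x \<in> ev C \<or> x \<in> od C"

definition graded :: "('k, 'a::ab_group_add, 'z) msc_scheme \<Rightarrow> 'a set \<Rightarrow> bool" where
  "graded C X \<longleftrightarrow> (\<forall>x\<in>X. \<exists>a\<in>X \<inter> ev C. \<exists>b\<in>X \<inter> od C. x = a + b)"

definition superalg :: "('k::field, 'a::ab_group_add, 'z) msc_scheme \<Rightarrow> nat \<Rightarrow> bool" where
  "superalg C n \<longleftrightarrow>
     module.subspace (sc C) (hom C n) \<and> graded C (hom C n) \<and>
     idn C n \<in> hom C n \<inter> ev C \<and>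
     (\<forall>x\<in>hom C n. \<forall>y\<in>hom C n. cmp C x y \<in> hom C n) \<and>
     (\<forall>x\<in>hom C n. \<forall>y\<in>hom C n. \<forall>z\<in>hom C n. cmp C (cmp C x y) z = cmp C x (cmp C y z)) \<and>
     (\<forall>x\<in>hom C n. cmp C (idn C n) x = x \<and> cmp C x (idn C n) = x) \<and>
     (\<forall>x\<in>hom C n. \<forall>y\<in>hom C n. \<forall>z\<in>hom C n.
        cmp C (x + y) z = cmp C x z + cmp C y z \<and> cmp C z (x + y) = cmp C z x + cmp C z y) \<and>
     (\<forall>c. \<forall>x\<in>hom C n. \<forall>y\<in>hom C n.
        cmp C (sc C c x) y = sc C c (cmp C x y) \<and> cmp C x (sc C c y) = sc C c (cmp C x y)) \<and>
     (\<forall>x\<in>hom C n. \<forall>y\<in>hom C n.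
        (x \<in> ev C \<and> y \<in> ev C \<longrightarrow> cmp C x y \<in> ev C) \<and>
        (x \<in> ev C \<and> y \<in> od C \<longrightarrow> cmp C x y \<in> od C) \<and>
        (x \<in> od C \<and> y \<in> ev C \<longrightarrow> cmp C x y \<in> od C) \<and>
        (x \<in> od C \<and> y \<in> od C \<longrightarrow> cmp C x y \<in> ev C))"

text \<open>Monoidal supercategory structure (strict), with objects indexed by nat as in (C1),
  Hom([n],[m]) = 0 for n /= m as in (C2) (only the spaces hom n exist).\<close>
definition mon_supercat :: "('k::field, 'a::ab_group_add, 'z) msc_scheme \<Rightarrow> bool" where
  "mon_supercat C \<longleftrightarrow>
     vector_space (sc C) \<and> module.subspace (sc C) (ev C) \<and> module.subspace (sc C) (od C) \<and>
     ev C \<inter> od C = {0} \<and>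
     (\<forall>n. superalg C n) \<and>
     (\<forall>m n. \<forall>f\<in>hom C m. \<forall>g\<in>hom C n.
        amg C f g \<in> hom C (m + n) \<and>
        (f \<in> ev C \<and> g \<in> ev C \<longrightarrow> amg C f g \<in> ev C) \<and>
        (f \<in> ev C \<and> g \<in> od C \<longrightarrow> amg C f g \<in> od C) \<and>
        (f \<in> od C \<and> g \<in> ev C \<longrightarrow> amg C f g \<in> od C) \<and>
        (f \<in> od C \<and> g \<in> od C \<longrightarrow> amg C f g \<in> ev C)) \<and>
     (\<forall>m n. \<forall>f\<in>hom C m. \<forall>f'\<in>hom C m. \<forall>g\<in>hom C n. \<forall>g'\<in>hom C n. \<forall>c.
        amg C (f + f') g = amg C f g + amg C f' g \<and>
        amg C f (g + g') = amg C f g + amg C f g' \<and>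
        amg C (sc C c f) g = sc C c (amg C f g) \<and>
        amg C f (sc C c g) = sc C c (amg C f g)) \<and>
     \<comment> \<open>super interchange law (Koszul sign rule)\<close>
     (\<forall>m n. \<forall>f\<in>hom C m. \<forall>f'\<in>hom C m. \<forall>g\<in>hom C n. \<forall>g'\<in>hom C n.
        homog C g \<and> homog C f' \<longrightarrow>
        cmp C (amg C f g) (amg C f' g') =
          (if g \<in> od C \<and> f' \<in> od C then - amg C (cmp C f f') (cmp C g g')
           else amg C (cmp C f f') (cmp C g g'))) \<and>
     (\<forall>m n. amg C (idn C m) (idn C n) = idn C (m + n)) \<and>
     (\<forall>l m n. \<forall>f\<in>hom C l. \<forall>g\<in>hom C m. \<forall>h\<in>hom C n.
        amg C (amg C f g) h = amg C f (amg C g h)) \<and>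
     (\<forall>n. \<forall>f\<in>hom C n. amg C (idn C 0) f = f \<and> amg C f (idn C 0) = f)"

definition findim :: "('k::field, 'a::ab_group_add, 'z) msc_scheme \<Rightarrow> nat \<Rightarrow> bool" where
  "findim C n \<longleftrightarrow> (\<exists>S. finite S \<and> S \<subseteq> hom C n \<and> module.span (sc C) S = hom C n)"

text \<open>(Graded) left ideals of B_n = sub-supermodules of the regular module.\<close>
definition lideal :: "('k::field, 'a::ab_group_add, 'z) msc_scheme \<Rightarrow> nat \<Rightarrow> 'a set \<Rightarrow> bool" where
  "lideal C n L \<longleftrightarrow> module.subspace (sc C) L \<and> L \<subseteq> hom C n \<and> graded C L \<and>
     (\<forall>b\<in>hom C n. \<forall>x\<in>L. cmp C b x \<in> L)"

text \<open>Semisimplicity (in the category with even morphisms): the regular module is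
  semisimple, i.e. every sub-supermodule of B_n has a complementary sub-supermodule.\<close>
definition semisimple :: "('k::field, 'a::ab_group_add, 'z) msc_scheme \<Rightarrow> nat \<Rightarrow> bool" where
  "semisimple C n \<longleftrightarrow> (\<forall>L. lideal C n L \<longrightarrow>
     (\<exists>L'. lideal C n L' \<and> L \<inter> L' = {0} \<and> hom C n = {x + y | x y. x \<in> L \<and> y \<in> L'}))"

text \<open>Simple left modules, realised as minimal (graded) left ideals.\<close>
definition mlideal :: "('k::field, 'a::ab_group_add, 'z) msc_scheme \<Rightarrow> nat \<Rightarrow> 'a set \<Rightarrow> bool" where
  "mlideal C n L \<longleftrightarrow> lideal C n L \<and> L \<noteq> {0} \<and>
     (\<forall>L'. lideal C n L' \<and> L' \<subseteq> L \<longrightarrow> L' = {0} \<or> L' = L)"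

definition liso :: "('k::field, 'a::ab_group_add, 'z) msc_scheme \<Rightarrow> nat \<Rightarrow> 'a set \<Rightarrow> 'a set \<Rightarrow> bool" where
  "liso C n L L' \<longleftrightarrow> (\<exists>f. bij_betw f L L' \<and>
     (\<forall>x\<in>L. \<forall>y\<in>L. f (x + y) = f x + f y) \<and> (\<forall>c. \<forall>x\<in>L. f (sc C c x) = sc C c (f x)) \<and>
     ((\<forall>x\<in>L \<inter> ev C. f x \<in> ev C) \<and> (\<forall>x\<in>L \<inter> od C. f x \<in> od C) \<and>
        (\<forall>b\<in>hom C n. \<forall>x\<in>L. f (cmp C b x) = cmp C b (f x))
      \<or>
      (\<forall>x\<in>L \<inter> ev C. f x \<in> od C) \<and> (\<forall>x\<in>L \<inter> od C. f x \<in> ev C) \<and>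
        (\<forall>b\<in>hom C n \<inter> ev C. \<forall>x\<in>L. f (cmp C b x) = cmp C b (f x)) \<and>
        (\<forall>b\<in>hom C n \<inter> od C. \<forall>x\<in>L. f (cmp C b x) = - cmp C b (f x))))"

text \<open>Lambda(B_n): isomorphism classes of simple left B_n-modules.\<close>
definition Lam :: "('k::field, 'a::ab_group_add, 'z) msc_scheme \<Rightarrow> nat \<Rightarrow> 'a set set set" where
  "Lam C n = {{L'. mlideal C n L' \<and> liso C n L L'} | L. mlideal C n L}"

definition LamC :: "('k::field, 'a::ab_group_add, 'z) msc_scheme \<Rightarrow> (nat \<times> 'a set set) set" where
  "LamC C = {(n, la). la \<in> Lam C n}"

definition Jlam :: "('k::field, 'a::ab_group_add, 'z) msc_scheme \<Rightarrow> 'a set set \<Rightarrow> 'a set" where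
  "Jlam C la = module.span (sc C) (\<Union>la)"

text \<open>The induced module B_{n+1} (x)_{B_1 (x) B_n} (B_1 (x) S), for S a left ideal of B_n,
  realised as the left ideal of B_{n+1} generated by iota_{1,n}(B_1 (x) S).\<close>
definition Ind :: "('k::field, 'a::ab_group_add, 'z) msc_scheme \<Rightarrow> nat \<Rightarrow> 'a set \<Rightarrow> 'a set" where
  "Ind C n S = module.span (sc C)
     {cmp C x (amg C a s) | x a s. x \<in> hom C (Suc n) \<and> a \<in> hom C 1 \<and> s \<in> S}"

text \<open>The simple class mu occurs (with positive multiplicity) in the B_{m}-module M.\<close>
definition occurs :: "'a set set \<Rightarrow> 'a set \<Rightarrow> bool" where
  "occurs mu M \<longleftrightarrow> (\<exists>L\<in>mu. L \<subseteq> M)"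

definition tideal :: "('k::field, 'a::ab_group_add, 'z) msc_scheme \<Rightarrow> nat \<Rightarrow> 'a set \<Rightarrow> bool" where
  "tideal C n I \<longleftrightarrow> module.subspace (sc C) I \<and> I \<subseteq> hom C n \<and>
     (\<forall>b\<in>hom C n. \<forall>x\<in>I. cmp C b x \<in> I \<and> cmp C x b \<in> I)"

definition Sigma_id :: "('k::field, 'a::ab_group_add, 'z) msc_scheme \<Rightarrow> nat \<Rightarrow> 'a set \<Rightarrow> 'a set" where
  "Sigma_id C n J = \<Inter>{I. tideal C (Suc n) I \<and> (%j. amg C (idn C 1) j) ` J \<subseteq> I}"

end

theory Submission
  imports Defs
begin

(*
  Let M be the sum of the isotypic components J^mu of B_(n+1) with lambda < mu. Each J^mu is a
  two-sided ideal, because right multiplication by a homogeneous element maps a simple left ideal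
  to 0 or onto an isomorphic one. For s in a simple left ideal S of class lambda, 1 (x) s lies in
  the induced left ideal Ind(S); by semisimplicity Ind(S) is contained in the sum of the J^mu over
  the classes mu occurring in it, and by (C4) these are exactly the mu > lambda. So M contains the
  generators of Sigma(J^lambda). Conversely, the interchange law gives a (x) s = (a (x) 1)(1 (x) s),
  so a two-sided ideal I containing the generators contains Ind(S), hence a simple left ideal L of
  every class mu > lambda. Writing 1 = e + e' along a decomposition B = L + L', we have x = x e on
  L, so every isomorphic image of L satisfies f x = x (f e) and lies in I; thus J^mu lies in I.
*)

definition linear_on :: "('k \<Rightarrow> 'a::ab_group_add \<Rightarrow> 'a) \<Rightarrow> 'a set \<Rightarrow> ('a \<Rightarrow> 'a) \<Rightarrow> bool" where
  "linear_on s V f \<longleftrightarrow> (\<forall>x\<in>V. \<forall>y\<in>V. f (x + y) = f x + f y) \<and> (\<forall>c. \<forall>x\<in>V. f (s c x) = s c (f x))"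

context module
begin

lemma linear_onD:
  assumes "linear_on scale V f"
  shows "x \<in> V \<Longrightarrow> y \<in> V \<Longrightarrow> f (x + y) = f x + f y" "x \<in> V \<Longrightarrow> f (c *s x) = c *s f x"
  using assms unfolding linear_on_def by blast+

lemma linear_on_subset: "linear_on scale V f \<Longrightarrow> L \<subseteq> V \<Longrightarrow> linear_on scale L f"
  unfolding linear_on_def by blast

lemma linear_on_comp:
  "linear_on scale V f \<Longrightarrow> linear_on scale W g \<Longrightarrow> f ` V \<subseteq> W \<Longrightarrow> linear_on scale V (\<lambda>x. g (f x))"
  unfolding linear_on_def by (simp add: image_subset_iff)

lemma linear_on_0:
  assumes "subspace V" "linear_on scale V f"
  shows "f 0 = 0"
proof -
  have "f (0 + 0) = f 0 + f 0" using linear_onD(1)[OF assms(2)] subspace_0[OF assms(1)] by blast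
  then show ?thesis by simp
qed

lemma linear_on_neg:
  assumes "subspace V" "linear_on scale V f" "x \<in> V"
  shows "f (- x) = - f x"
proof -
  have "f (x + - x) = f x + f (- x)"
    using linear_onD(1)[OF assms(2)] assms(3) subspace_neg[OF assms(1,3)] by blast
  then have "f x + f (- x) = 0" using linear_on_0[OF assms(1,2)] by simp
  then show ?thesis by (metis neg_eq_iff_add_eq_0)
qed

lemma linear_on_diff:
  assumes "subspace V" "linear_on scale V f" "x \<in> V" "y \<in> V"
  shows "f (x - y) = f x - f y"
  using linear_onD(1)[OF assms(2) assms(3) subspace_neg[OF assms(1,4)]] linear_on_neg[OF assms(1,2,4)]
  by simp

lemma subspace_linear_image:
  assumes "subspace V" "linear_on scale V f"
  shows "subspace (f ` V)"
proof (rule subspaceI)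
  show "0 \<in> f ` V" using linear_on_0[OF assms] subspace_0[OF assms(1)] by (metis imageI)
next
  fix x y assume "x \<in> f ` V" "y \<in> f ` V"
  then obtain u v where "u \<in> V" "v \<in> V" "x = f u" "y = f v" by blast
  then have "x + y = f (u + v)" using linear_onD(1)[OF assms(2)] by simp
  then show "x + y \<in> f ` V" using subspace_add[OF assms(1) \<open>u \<in> V\<close> \<open>v \<in> V\<close>] by blast
next
  fix c x assume "x \<in> f ` V"
  then obtain u where "u \<in> V" "x = f u" by blast
  then have "c *s x = f (c *s u)" using linear_onD(2)[OF assms(2)] by simp
  then show "c *s x \<in> f ` V" using subspace_scale[OF assms(1) \<open>u \<in> V\<close>] by blast
qed

lemma linear_on_span_subset:
  assumes "subspace V" "linear_on scale V f" "X \<subseteq> V" "f ` X \<subseteq> T" "subspace T"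
  shows "f ` span X \<subseteq> T"
proof -
  have "subspace {x \<in> V. f x \<in> T}"
  proof (rule subspaceI)
    show "0 \<in> {x \<in> V. f x \<in> T}"
      using linear_on_0[OF assms(1,2)] subspace_0[OF assms(1)] subspace_0[OF assms(5)] by simp
  next
    fix x y assume "x \<in> {x \<in> V. f x \<in> T}" "y \<in> {x \<in> V. f x \<in> T}"
    then show "x + y \<in> {x \<in> V. f x \<in> T}"
      using linear_onD(1)[OF assms(2)] subspace_add[OF assms(1)] subspace_add[OF assms(5)] by simp
  next
    fix c x assume "x \<in> {x \<in> V. f x \<in> T}"
    then show "c *s x \<in> {x \<in> V. f x \<in> T}"
      using linear_onD(2)[OF assms(2)] subspace_scale[OF assms(1)] subspace_scale[OF assms(5)] by simp
  qed
  moreover have "X \<subseteq> {x \<in> V. f x \<in> T}" using assms(3,4) by blast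
  ultimately have "span X \<subseteq> {x \<in> V. f x \<in> T}" by (simp add: span_minimal)
  then show ?thesis by blast
qed

end

section \<open>Monoidal supercategories\<close>

locale mon_supercategory =
  fixes C :: "('k::field, 'a::ab_group_add) msc"
  assumes mon_supercat: "mon_supercat C"

sublocale mon_supercategory \<subseteq> vector_space "sc C"
  using mon_supercat unfolding mon_supercat_def by (elim conjE)

context mon_supercategory
begin

lemma superalg: "superalg C m"
  using mon_supercat unfolding mon_supercat_def by (elim conjE) blast

lemma hom_subspace: "subspace (hom C m)"
  using superalg[of m] unfolding superalg_def by (elim conjE)

lemma hom_graded: "graded C (hom C m)"
  using superalg[of m] unfolding superalg_def by (elim conjE)

lemma idn_hom: "idn C m \<in> hom C m"
  using superalg[of m] unfolding superalg_def by (elim conjE IntE)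

lemma idn_ev: "idn C m \<in> ev C"
  using superalg[of m] unfolding superalg_def by (elim conjE IntE)

lemma cmp_closed: "x \<in> hom C m \<Longrightarrow> y \<in> hom C m \<Longrightarrow> cmp C x y \<in> hom C m"
  using superalg[of m] unfolding superalg_def by (elim conjE) blast

lemma cmp_assoc:
  "x \<in> hom C m \<Longrightarrow> y \<in> hom C m \<Longrightarrow> z \<in> hom C m \<Longrightarrow> cmp C (cmp C x y) z = cmp C x (cmp C y z)"
  using superalg[of m] unfolding superalg_def by (elim conjE) blast

lemma cmp_idn_left: "x \<in> hom C m \<Longrightarrow> cmp C (idn C m) x = x"
  using superalg[of m] unfolding superalg_def by (elim conjE) blast

lemma cmp_idn_right: "x \<in> hom C m \<Longrightarrow> cmp C x (idn C m) = x"
  using superalg[of m] unfolding superalg_def by (elim conjE) blast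

lemma cmp_distrib_left:
  "x \<in> hom C m \<Longrightarrow> y \<in> hom C m \<Longrightarrow> z \<in> hom C m \<Longrightarrow> cmp C z (x + y) = cmp C z x + cmp C z y"
  using superalg[of m] unfolding superalg_def by (elim conjE) blast

lemma cmp_distrib_right:
  "x \<in> hom C m \<Longrightarrow> y \<in> hom C m \<Longrightarrow> z \<in> hom C m \<Longrightarrow> cmp C (x + y) z = cmp C x z + cmp C y z"
  using superalg[of m] unfolding superalg_def by (elim conjE) blast

lemma cmp_scale_left: "x \<in> hom C m \<Longrightarrow> y \<in> hom C m \<Longrightarrow> cmp C (sc C c x) y = sc C c (cmp C x y)"
  using superalg[of m] unfolding superalg_def by (elim conjE) blast

lemma cmp_scale_right: "x \<in> hom C m \<Longrightarrow> y \<in> hom C m \<Longrightarrow> cmp C x (sc C c y) = sc C c (cmp C x y)"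
  using superalg[of m] unfolding superalg_def by (elim conjE) blast

lemma
  assumes "x \<in> hom C m" "y \<in> hom C m"
  shows cmp_ev_ev: "x \<in> ev C \<Longrightarrow> y \<in> ev C \<Longrightarrow> cmp C x y \<in> ev C"
    and cmp_ev_od: "x \<in> ev C \<Longrightarrow> y \<in> od C \<Longrightarrow> cmp C x y \<in> od C"
    and cmp_od_ev: "x \<in> od C \<Longrightarrow> y \<in> ev C \<Longrightarrow> cmp C x y \<in> od C"
    and cmp_od_od: "x \<in> od C \<Longrightarrow> y \<in> od C \<Longrightarrow> cmp C x y \<in> ev C"
  using superalg[of m] assms unfolding superalg_def by (elim conjE; blast)+

lemma cmp_homog:
  "x \<in> hom C m \<Longrightarrow> y \<in> hom C m \<Longrightarrow> homog C x \<Longrightarrow> homog C y \<Longrightarrow> homog C (cmp C x y)"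
  unfolding homog_def using cmp_ev_ev cmp_ev_od cmp_od_ev cmp_od_od by blast

lemma ev_subspace: "subspace (ev C)"
  using mon_supercat unfolding mon_supercat_def by (elim conjE)

lemma od_subspace: "subspace (od C)"
  using mon_supercat unfolding mon_supercat_def by (elim conjE)

lemma ev_inter_od: "ev C \<inter> od C = {0}"
  using mon_supercat unfolding mon_supercat_def by (elim conjE)

lemma zero_ev: "0 \<in> ev C" and zero_od: "0 \<in> od C"
  using subspace_0 ev_subspace od_subspace by blast+

lemma amg_hom: "f \<in> hom C p \<Longrightarrow> g \<in> hom C q \<Longrightarrow> amg C f g \<in> hom C (p + q)"
  using mon_supercat unfolding mon_supercat_def by (elim conjE) blast

lemma amg_homog:
  "f \<in> hom C p \<Longrightarrow> g \<in> hom C q \<Longrightarrow> homog C f \<Longrightarrow> homog C g \<Longrightarrow> homog C (amg C f g)"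
  using mon_supercat unfolding mon_supercat_def homog_def by (elim conjE) blast

lemma amg_distrib_left:
  "f \<in> hom C p \<Longrightarrow> g \<in> hom C q \<Longrightarrow> g' \<in> hom C q \<Longrightarrow> amg C f (g + g') = amg C f g + amg C f g'"
  using mon_supercat unfolding mon_supercat_def by (elim conjE) blast

lemma amg_distrib_right:
  "f \<in> hom C p \<Longrightarrow> f' \<in> hom C p \<Longrightarrow> g \<in> hom C q \<Longrightarrow> amg C (f + f') g = amg C f g + amg C f' g"
  using mon_supercat unfolding mon_supercat_def by (elim conjE) blast

lemma amg_scale_right: "f \<in> hom C p \<Longrightarrow> g \<in> hom C q \<Longrightarrow> amg C f (sc C c g) = sc C c (amg C f g)"
  using mon_supercat unfolding mon_supercat_def by (elim conjE) blast

lemma amg_interchange: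
  assumes "f \<in> hom C p" "f' \<in> hom C p" "g \<in> hom C q" "g' \<in> hom C q" "homog C g" "homog C f'"
  shows "cmp C (amg C f g) (amg C f' g') =
          (if g \<in> od C \<and> f' \<in> od C then - amg C (cmp C f f') (cmp C g g')
           else amg C (cmp C f f') (cmp C g g'))"
  using mon_supercat assms unfolding mon_supercat_def by (elim conjE) blast

lemma ev_od_unique:
  assumes "a \<in> ev C" "a' \<in> ev C" "b \<in> od C" "b' \<in> od C" "a + b = a' + b'"
  shows "a = a'" "b = b'"
proof -
  have "a - a' = b' - b" using assms(5) by (simp add: algebra_simps)
  moreover have "a - a' \<in> ev C" "b' - b \<in> od C"
    using assms subspace_diff ev_subspace od_subspace by blast+
  ultimately have "a - a' = 0" using ev_inter_od by (metis IntI singletonD)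
  then show "a = a'" by simp
  then show "b = b'" using assms(5) by simp
qed

lemma gradedE:
  assumes "graded C K" "x \<in> K"
  obtains a b where "a \<in> K" "a \<in> ev C" "b \<in> K" "b \<in> od C" "x = a + b"
  using assms unfolding graded_def by blast

lemma graded_parts:
  assumes "graded C K" "a \<in> ev C" "b \<in> od C" "a + b \<in> K"
  shows "a \<in> K" "b \<in> K"
proof -
  obtain a' b' where "a' \<in> K" "a' \<in> ev C" "b' \<in> K" "b' \<in> od C" "a + b = a' + b'"
    using gradedE[OF assms(1,4)] by metis
  then show "a \<in> K" "b \<in> K" using ev_od_unique[of a a' b b'] assms(2,3) by auto
qed

lemma graded_span:
  assumes "X \<subseteq> {a + b | a b. a \<in> span X \<inter> ev C \<and> b \<in> span X \<inter> od C}"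
  shows "graded C (span X)"
proof -
  let ?P = "{a + b | a b. a \<in> span X \<inter> ev C \<and> b \<in> span X \<inter> od C}"
  have "subspace ?P"
  proof (rule subspaceI)
    show "0 \<in> ?P" using span_zero zero_ev zero_od by force
  next
    fix x y assume "x \<in> ?P" "y \<in> ?P"
    then obtain a b a' b' where "a \<in> span X \<inter> ev C" "b \<in> span X \<inter> od C" "x = a + b"
      "a' \<in> span X \<inter> ev C" "b' \<in> span X \<inter> od C" "y = a' + b'" by blast
    moreover have "x + y = (a + a') + (b + b')" using calculation by (simp add: algebra_simps)
    ultimately show "x + y \<in> ?P"
      using span_add subspace_add[OF ev_subspace] subspace_add[OF od_subspace] by blast
  next
    fix c x assume "x \<in> ?P"
    then obtain a b where "a \<in> span X \<inter> ev C" "b \<in> span X \<inter> od C" "x = a + b" by blast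
    moreover have "sc C c x = sc C c a + sc C c b" using calculation by (simp add: scale_right_distrib)
    ultimately show "sc C c x \<in> ?P"
      using span_scale subspace_scale[OF ev_subspace] subspace_scale[OF od_subspace] by blast
  qed
  then have "span X \<subseteq> ?P" using span_minimal assms by blast
  then show ?thesis unfolding graded_def by blast
qed

lemma graded_span_homog:
  assumes "X \<subseteq> ev C \<union> od C"
  shows "graded C (span X)"
proof (rule graded_span, rule subsetI)
  fix x assume "x \<in> X"
  then have x: "x \<in> span X" "x = x + 0" "x = 0 + x" by (simp_all add: span_base)
  then show "x \<in> {a + b | a b. a \<in> span X \<inter> ev C \<and> b \<in> span X \<inter> od C}"
    using assms \<open>x \<in> X\<close> span_zero zero_ev zero_od by blast
qed

lemma linear_on_cmp_left: "b \<in> hom C m \<Longrightarrow> linear_on (sc C) (hom C m) (cmp C b)"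
  unfolding linear_on_def using cmp_distrib_left cmp_scale_right by blast

lemma linear_on_cmp_right: "b \<in> hom C m \<Longrightarrow> linear_on (sc C) (hom C m) (\<lambda>x. cmp C x b)"
  unfolding linear_on_def using cmp_distrib_right cmp_scale_left by blast

lemma linear_on_amg: "f \<in> hom C p \<Longrightarrow> linear_on (sc C) (hom C q) (amg C f)"
  unfolding linear_on_def using amg_distrib_left amg_scale_right by blast

lemma cmp_0_left: "x \<in> hom C m \<Longrightarrow> cmp C 0 x = 0"
  using linear_on_0[OF hom_subspace linear_on_cmp_right] .

lemma cmp_0_right: "x \<in> hom C m \<Longrightarrow> cmp C x 0 = 0"
  using linear_on_0[OF hom_subspace linear_on_cmp_left] .

section \<open>Left and two-sided ideals\<close>

lemma lidealD:
  assumes "lideal C m L"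
  shows lideal_subspace: "subspace L" and lideal_hom: "L \<subseteq> hom C m" and lideal_graded: "graded C L"
    and lideal_cmp: "b \<in> hom C m \<Longrightarrow> x \<in> L \<Longrightarrow> cmp C b x \<in> L"
  using assms unfolding lideal_def by blast+

lemma tidealD:
  assumes "tideal C m T"
  shows tideal_subspace: "subspace T" and tideal_hom: "T \<subseteq> hom C m"
    and tideal_cmp_left: "b \<in> hom C m \<Longrightarrow> x \<in> T \<Longrightarrow> cmp C b x \<in> T"
    and tideal_cmp_right: "b \<in> hom C m \<Longrightarrow> x \<in> T \<Longrightarrow> cmp C x b \<in> T"
  using assms unfolding tideal_def by blast+

lemma lideal_zero: "lideal C m {0}"
  unfolding lideal_def graded_def
  using subspace_0[OF hom_subspace] zero_ev zero_od cmp_0_right by auto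

lemma lideal_inter:
  assumes "lideal C m A" "lideal C m B"
  shows "lideal C m (A \<inter> B)"
proof -
  have "graded C (A \<inter> B)"
    unfolding graded_def
  proof
    fix x assume "x \<in> A \<inter> B"
    then obtain a b where "a \<in> A" "a \<in> ev C" "b \<in> A" "b \<in> od C" "x = a + b"
      using gradedE[OF lideal_graded[OF assms(1)]] by blast
    moreover have "a \<in> B" "b \<in> B"
      using graded_parts[OF lideal_graded[OF assms(2)]] calculation \<open>x \<in> A \<inter> B\<close> by blast+
    ultimately show "\<exists>a\<in>A \<inter> B \<inter> ev C. \<exists>b\<in>A \<inter> B \<inter> od C. x = a + b" by blast
  qed
  then show ?thesis
    using assms subspace_inter unfolding lideal_def by blast
qed

lemma lideal_span_Union:
  assumes "\<And>L. L \<in> F \<Longrightarrow> lideal C m L"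
  shows "lideal C m (span (\<Union>F))"
proof -
  have U: "\<Union>F \<subseteq> hom C m" using assms lideal_hom by blast
  have "graded C (span (\<Union>F))"
  proof (rule graded_span, rule subsetI)
    fix x assume "x \<in> \<Union>F"
    then obtain L where "L \<in> F" "x \<in> L" by blast
    then obtain a b where "a \<in> L" "a \<in> ev C" "b \<in> L" "b \<in> od C" "x = a + b"
      using gradedE[OF lideal_graded[OF assms]] by metis
    then show "x \<in> {a + b | a b. a \<in> span (\<Union>F) \<inter> ev C \<and> b \<in> span (\<Union>F) \<inter> od C}"
      using \<open>L \<in> F\<close> span_base by blast
  qed
  moreover have "cmp C b ` span (\<Union>F) \<subseteq> span (\<Union>F)" if b: "b \<in> hom C m" for b
  proof (rule linear_on_span_subset[OF hom_subspace linear_on_cmp_left[OF b] U])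
    show "cmp C b ` \<Union>F \<subseteq> span (\<Union>F)" using assms lideal_cmp[OF _ b] span_base by blast
  qed simp
  ultimately show ?thesis
    unfolding lideal_def using span_minimal[OF U hom_subspace] by blast
qed

lemma tideal_span_Union:
  assumes "\<And>T. T \<in> F \<Longrightarrow> tideal C m T"
  shows "tideal C m (span (\<Union>F))"
proof -
  have U: "\<Union>F \<subseteq> hom C m" using assms tideal_hom by blast
  have "cmp C b ` span (\<Union>F) \<subseteq> span (\<Union>F)" if b: "b \<in> hom C m" for b
  proof (rule linear_on_span_subset[OF hom_subspace linear_on_cmp_left[OF b] U])
    show "cmp C b ` \<Union>F \<subseteq> span (\<Union>F)" using assms tideal_cmp_left[OF _ b] span_base by blast
  qed simp
  moreover have "(\<lambda>x. cmp C x b) ` span (\<Union>F) \<subseteq> span (\<Union>F)" if b: "b \<in> hom C m" for b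
  proof (rule linear_on_span_subset[OF hom_subspace linear_on_cmp_right[OF b] U])
    show "(\<lambda>x. cmp C x b) ` \<Union>F \<subseteq> span (\<Union>F)" using assms tideal_cmp_right[OF _ b] span_base by blast
  qed simp
  ultimately show ?thesis
    unfolding tideal_def using span_minimal[OF U hom_subspace] by blast
qed

section \<open>The grading involution\<close>

definition (in -) even_part :: "('k, 'a::ab_group_add, 'z) msc_scheme \<Rightarrow> 'a \<Rightarrow> 'a" where
  "even_part C y = (SOME a. a \<in> ev C \<and> y - a \<in> od C)"

definition (in -) twist :: "('k, 'a::ab_group_add, 'z) msc_scheme \<Rightarrow> 'a \<Rightarrow> 'a" where
  "twist C y = even_part C y - (y - even_part C y)"

lemma even_part_eq:
  assumes "a \<in> ev C" "b \<in> od C"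
  shows "even_part C (a + b) = a"
proof -
  let ?e = "even_part C (a + b)"
  have "\<exists>a'. a' \<in> ev C \<and> (a + b) - a' \<in> od C" using assms by auto
  then have "?e \<in> ev C \<and> (a + b) - ?e \<in> od C"
    unfolding even_part_def by (rule someI_ex)
  moreover have "?e + ((a + b) - ?e) = a + b" by simp
  ultimately show ?thesis using ev_od_unique(1) assms by blast
qed

lemma twist_eq: "a \<in> ev C \<Longrightarrow> b \<in> od C \<Longrightarrow> twist C (a + b) = a - b"
  unfolding twist_def by (simp add: even_part_eq)

lemma twist_ev: "x \<in> ev C \<Longrightarrow> twist C x = x"
  using twist_eq[of x 0] zero_od by simp

lemma twist_od: "x \<in> od C \<Longrightarrow> twist C x = - x"
  using twist_eq[of 0 x] zero_ev by simp

lemma twist_mem: "graded C L \<Longrightarrow> subspace L \<Longrightarrow> x \<in> L \<Longrightarrow> twist C x \<in> L"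
  by (metis gradedE subspace_diff twist_eq)

lemma twist_twist:
  assumes "graded C L" "x \<in> L"
  shows "twist C (twist C x) = x"
proof -
  obtain a b where "a \<in> ev C" "b \<in> od C" "x = a + b" using gradedE[OF assms] by metis
  moreover have "- b \<in> od C" using subspace_neg[OF od_subspace] calculation(2) .
  ultimately show ?thesis using twist_eq[of a b] twist_eq[of a "- b"] by simp
qed

lemma linear_on_twist: "graded C L \<Longrightarrow> linear_on (sc C) L (twist C)"
  unfolding linear_on_def
proof (intro conjI ballI allI)
  fix x y assume "graded C L" "x \<in> L" "y \<in> L"
  then obtain a b a' b' where ab: "a \<in> ev C" "b \<in> od C" "x = a + b" "a' \<in> ev C" "b' \<in> od C" "y = a' + b'"
    using gradedE by metis
  then have "a + a' \<in> ev C" "b + b' \<in> od C" "x + y = (a + a') + (b + b')"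
    using subspace_add ev_subspace od_subspace by (auto simp: algebra_simps)
  then have "twist C (x + y) = (a + a') - (b + b')" using twist_eq by metis
  moreover have "twist C x = a - b" "twist C y = a' - b'" using twist_eq ab by simp_all
  ultimately show "twist C (x + y) = twist C x + twist C y" by (metis add_diff_add)
next
  fix c x assume "graded C L" "x \<in> L"
  then obtain a b where ab: "a \<in> ev C" "b \<in> od C" "x = a + b" using gradedE by metis
  then have "sc C c a \<in> ev C" "sc C c b \<in> od C" "sc C c x = sc C c a + sc C c b"
    using subspace_scale ev_subspace od_subspace by (auto simp: scale_right_distrib)
  then have "twist C (sc C c x) = sc C c a - sc C c b" using twist_eq by metis
  moreover have "twist C x = a - b" using twist_eq ab by simp
  ultimately show "twist C (sc C c x) = sc C c (twist C x)" by (simp add: scale_right_diff_distrib)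
qed

lemma bij_betw_twist: "graded C L \<Longrightarrow> subspace L \<Longrightarrow> bij_betw (twist C) L L"
  by (rule bij_betw_byWitness[where f' = "twist C"]) (auto simp: twist_twist twist_mem)

lemma twist_cmp:
  assumes b: "b \<in> hom C m" and x: "x \<in> hom C m"
  shows "b \<in> ev C \<Longrightarrow> twist C (cmp C b x) = cmp C b (twist C x)"
    and "b \<in> od C \<Longrightarrow> twist C (cmp C b x) = - cmp C b (twist C x)"
proof -
  obtain x0 x1 where xs: "x0 \<in> hom C m" "x0 \<in> ev C" "x1 \<in> hom C m" "x1 \<in> od C" "x = x0 + x1"
    using gradedE[OF hom_graded x] by metis
  have bx: "cmp C b x = cmp C b x0 + cmp C b x1" using cmp_distrib_left[OF xs(1,3) b] xs(5) by simp
  have bt: "cmp C b (twist C x) = cmp C b x0 - cmp C b x1"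
    using twist_eq[OF xs(2,4)] linear_on_diff[OF hom_subspace linear_on_cmp_left[OF b] xs(1,3)] xs(5)
    by simp
  show "b \<in> ev C \<Longrightarrow> twist C (cmp C b x) = cmp C b (twist C x)"
    using twist_eq cmp_ev_ev[OF b xs(1)] cmp_ev_od[OF b xs(3)] xs bx bt by simp
  show "b \<in> od C \<Longrightarrow> twist C (cmp C b x) = - cmp C b (twist C x)"
    using twist_eq[of "cmp C b x1" "cmp C b x0"] cmp_od_ev[OF b xs(1)] cmp_od_od[OF b xs(3)] xs bx bt
    by (simp add: add.commute)
qed

section \<open>Graded isomorphisms of left ideals\<close>

definition (in -) lmod_hom ::
  "('k::field, 'a::ab_group_add, 'z) msc_scheme \<Rightarrow> nat \<Rightarrow> 'a set \<Rightarrow> ('a \<Rightarrow> 'a) \<Rightarrow> bool" where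
  "lmod_hom C m L f \<longleftrightarrow> linear_on (sc C) L f \<and> (\<forall>b\<in>hom C m. \<forall>x\<in>L. f (cmp C b x) = cmp C b (f x))"

(*
  An odd isomorphism in the sense of liso satisfies f (b x) = (-1)^|b| b (f x). Precomposed with
  the grading involution it becomes B-linear, so liso can be replaced by B-linear bijections that
  preserve or reverse parity (liso_iff_graded_liso), which compose and invert without signs.
*)
definition (in -) graded_lmod_hom ::
  "('k::field, 'a::ab_group_add, 'z) msc_scheme \<Rightarrow> nat \<Rightarrow> 'a set \<Rightarrow> ('a \<Rightarrow> 'a) \<Rightarrow> bool" where
  "graded_lmod_hom C m L f \<longleftrightarrow> lmod_hom C m L f \<and>
     (f ` (L \<inter> ev C) \<subseteq> ev C \<and> f ` (L \<inter> od C) \<subseteq> od C \<or>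
      f ` (L \<inter> ev C) \<subseteq> od C \<and> f ` (L \<inter> od C) \<subseteq> ev C)"

definition (in -) graded_liso ::
  "('k::field, 'a::ab_group_add, 'z) msc_scheme \<Rightarrow> nat \<Rightarrow> 'a set \<Rightarrow> 'a set \<Rightarrow> bool" where
  "graded_liso C m L X \<longleftrightarrow> (\<exists>f. bij_betw f L X \<and> graded_lmod_hom C m L f)"

lemma lmod_homD:
  assumes "lmod_hom C m L f"
  shows "linear_on (sc C) L f" "b \<in> hom C m \<Longrightarrow> x \<in> L \<Longrightarrow> f (cmp C b x) = cmp C b (f x)"
  using assms unfolding lmod_hom_def by blast+

lemma lmod_hom_comp:
  assumes "lmod_hom C m L f" "lmod_hom C m X g" "f ` L \<subseteq> X"
  shows "lmod_hom C m L (\<lambda>x. g (f x))"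
proof -
  have "linear_on (sc C) L (\<lambda>x. g (f x))"
    using linear_on_comp[OF lmod_homD(1)[OF assms(1)] lmod_homD(1)[OF assms(2)] assms(3)] .
  moreover have "g (f (cmp C b x)) = cmp C b (g (f x))" if "b \<in> hom C m" "x \<in> L" for b x
    using lmod_homD(2)[OF assms(1) that] lmod_homD(2)[OF assms(2) that(1)] assms(3) that(2) by auto
  ultimately show ?thesis unfolding lmod_hom_def by blast
qed

lemma lmod_hom_inv_into:
  assumes L: "lideal C m L" and f: "bij_betw f L X" "lmod_hom C m L f"
  shows "lmod_hom C m X (inv_into L f)"
proof -
  let ?g = "inv_into L f"
  have gX: "?g y \<in> L" "f (?g y) = y" if "y \<in> X" for y
    using that bij_betw_apply[OF bij_betw_inv_into[OF f(1)]] f_inv_into_f[of y f L]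
      bij_betw_imp_surj_on[OF f(1)] by auto
  have gf: "?g (f x) = x" if "x \<in> L" for x
    using inv_into_f_f[OF bij_betw_imp_inj_on[OF f(1)] that] .
  note lin = linear_onD[OF lmod_homD(1)[OF f(2)]]
  have "?g (y + y') = ?g y + ?g y'" if "y \<in> X" "y' \<in> X" for y y'
    using gf[OF subspace_add[OF lideal_subspace[OF L] gX(1)[OF that(1)] gX(1)[OF that(2)]]]
      lin(1)[OF gX(1)[OF that(1)] gX(1)[OF that(2)]] gX(2) that by simp
  moreover have "?g (sc C c y) = sc C c (?g y)" if "y \<in> X" for c y
    using gf[OF subspace_scale[OF lideal_subspace[OF L] gX(1)[OF that]]] lin(2)[OF gX(1)[OF that]]
      gX(2)[OF that] by simp
  moreover have "?g (cmp C b y) = cmp C b (?g y)" if "b \<in> hom C m" "y \<in> X" for b y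
    using gf[OF lideal_cmp[OF L that(1) gX(1)[OF that(2)]]]
      lmod_homD(2)[OF f(2) that(1) gX(1)[OF that(2)]] gX(2)[OF that(2)] by simp
  ultimately show ?thesis unfolding lmod_hom_def linear_on_def by blast
qed

lemma parity_reflect:
  assumes L: "graded C L" "subspace L" and f: "inj_on f L" "linear_on (sc C) L f"
    and ED: "subspace E" "subspace D" "E \<inter> D = {0}"
    and par: "f ` (L \<inter> ev C) \<subseteq> E" "f ` (L \<inter> od C) \<subseteq> D"
    and x: "x \<in> L"
  shows "f x \<in> E \<Longrightarrow> x \<in> ev C" and "f x \<in> D \<Longrightarrow> x \<in> od C"
proof -
  obtain a b where ab: "a \<in> L" "a \<in> ev C" "b \<in> L" "b \<in> od C" "x = a + b"
    using gradedE[OF L(1) x] by metis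
  have fx: "f x = f a + f b" using linear_onD(1)[OF f(2) ab(1,3)] ab(5) by simp
  have fab: "f a \<in> E" "f b \<in> D" using par ab by blast+
  have vanish: "y = 0" if "y \<in> L" "f y = 0" for y
    using f(1) that subspace_0[OF L(2)] linear_on_0[OF L(2) f(2)] unfolding inj_on_def by metis
  show "x \<in> ev C" if "f x \<in> E"
  proof -
    have "f b = f x - f a" using fx by simp
    then have "f b \<in> E \<inter> D" using subspace_diff[OF ED(1) that fab(1)] fab(2) by simp
    then have "b = 0" using vanish[OF ab(3)] ED(3) by blast
    then show ?thesis using ab by simp
  qed
  show "x \<in> od C" if "f x \<in> D"
  proof -
    have "f a = f x - f b" using fx by simp
    then have "f a \<in> E \<inter> D" using subspace_diff[OF ED(2) that fab(2)] fab(1) by simp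
    then have "a = 0" using vanish[OF ab(1)] ED(3) by blast
    then show ?thesis using ab by simp
  qed
qed

lemma graded_liso_sym:
  assumes L: "lideal C m L" and "graded_liso C m L X"
  shows "graded_liso C m X L"
proof -
  obtain f where f: "bij_betw f L X" "lmod_hom C m L f"
    and par: "f ` (L \<inter> ev C) \<subseteq> ev C \<and> f ` (L \<inter> od C) \<subseteq> od C \<or>
              f ` (L \<inter> ev C) \<subseteq> od C \<and> f ` (L \<inter> od C) \<subseteq> ev C"
    using assms(2) unfolding graded_liso_def graded_lmod_hom_def by blast
  let ?g = "inv_into L f"
  have g: "bij_betw ?g X L" "lmod_hom C m X ?g"
    using bij_betw_inv_into[OF f(1)] lmod_hom_inv_into[OF L f] by blast+
  have gX: "?g y \<in> L" "f (?g y) = y" if "y \<in> X" for y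
    using that bij_betw_apply[OF g(1)] f_inv_into_f[of y f L] bij_betw_imp_surj_on[OF f(1)] by auto
  note reflect = parity_reflect[OF lideal_graded[OF L] lideal_subspace[OF L]
      bij_betw_imp_inj_on[OF f(1)] lmod_homD(1)[OF f(2)]]
  have ev_od: "od C \<inter> ev C = {0}" using ev_inter_od by blast
  from par have "?g ` (X \<inter> ev C) \<subseteq> ev C \<and> ?g ` (X \<inter> od C) \<subseteq> od C \<or>
                 ?g ` (X \<inter> ev C) \<subseteq> od C \<and> ?g ` (X \<inter> od C) \<subseteq> ev C"
  proof (elim disjE conjE)
    assume p: "f ` (L \<inter> ev C) \<subseteq> ev C" "f ` (L \<inter> od C) \<subseteq> od C"
    have "?g y \<in> ev C" if "y \<in> X" "y \<in> ev C" for y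
      using reflect(1)[OF ev_subspace od_subspace ev_inter_od p gX(1)] gX(2) that by simp
    moreover have "?g y \<in> od C" if "y \<in> X" "y \<in> od C" for y
      using reflect(2)[OF ev_subspace od_subspace ev_inter_od p gX(1)] gX(2) that by simp
    ultimately show ?thesis by blast
  next
    assume p: "f ` (L \<inter> ev C) \<subseteq> od C" "f ` (L \<inter> od C) \<subseteq> ev C"
    have "?g y \<in> od C" if "y \<in> X" "y \<in> ev C" for y
      using reflect(2)[OF od_subspace ev_subspace ev_od p gX(1)] gX(2) that by simp
    moreover have "?g y \<in> ev C" if "y \<in> X" "y \<in> od C" for y
      using reflect(1)[OF od_subspace ev_subspace ev_od p gX(1)] gX(2) that by simp
    ultimately show ?thesis by blast
  qed
  then show ?thesis using g unfolding graded_liso_def graded_lmod_hom_def by blast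
qed

lemma graded_liso_trans:
  assumes "graded_liso C m L X" "graded_liso C m X Y"
  shows "graded_liso C m L Y"
proof -
  obtain f where f: "bij_betw f L X" "lmod_hom C m L f"
    and pf: "f ` (L \<inter> ev C) \<subseteq> ev C \<and> f ` (L \<inter> od C) \<subseteq> od C \<or>
             f ` (L \<inter> ev C) \<subseteq> od C \<and> f ` (L \<inter> od C) \<subseteq> ev C"
    using assms(1) unfolding graded_liso_def graded_lmod_hom_def by blast
  obtain g where g: "bij_betw g X Y" "lmod_hom C m X g"
    and pg: "g ` (X \<inter> ev C) \<subseteq> ev C \<and> g ` (X \<inter> od C) \<subseteq> od C \<or>
             g ` (X \<inter> ev C) \<subseteq> od C \<and> g ` (X \<inter> od C) \<subseteq> ev C"
    using assms(2) unfolding graded_liso_def graded_lmod_hom_def by blast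
  have fX: "f ` L \<subseteq> X" using bij_betw_imp_surj_on[OF f(1)] by blast
  have comp: "(\<lambda>x. g (f x)) ` (L \<inter> P) \<subseteq> R"
    if "f ` (L \<inter> P) \<subseteq> Q" "g ` (X \<inter> Q) \<subseteq> R" for P Q R
    using that fX by blast
  have "bij_betw (\<lambda>x. g (f x)) L Y" using bij_betw_trans[OF f(1) g(1)] by (simp add: comp_def)
  moreover have "lmod_hom C m L (\<lambda>x. g (f x))" using lmod_hom_comp[OF f(2) g(2) fX] .
  moreover have "(\<lambda>x. g (f x)) ` (L \<inter> ev C) \<subseteq> ev C \<and> (\<lambda>x. g (f x)) ` (L \<inter> od C) \<subseteq> od C \<or>
                 (\<lambda>x. g (f x)) ` (L \<inter> ev C) \<subseteq> od C \<and> (\<lambda>x. g (f x)) ` (L \<inter> od C) \<subseteq> ev C"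
    using pf pg comp by metis
  ultimately show ?thesis unfolding graded_liso_def graded_lmod_hom_def by blast
qed

lemma signed_lmod_hom_twist:
  assumes L: "lideal C m L" and f: "linear_on (sc C) L f" "f ` L \<subseteq> hom C m"
    and ev: "\<And>b x. b \<in> hom C m \<Longrightarrow> b \<in> ev C \<Longrightarrow> x \<in> L \<Longrightarrow> f (cmp C b x) = cmp C b (f x)"
    and od: "\<And>b x. b \<in> hom C m \<Longrightarrow> b \<in> od C \<Longrightarrow> x \<in> L \<Longrightarrow> f (cmp C b x) = - cmp C b (f x)"
  shows "lmod_hom C m L (\<lambda>x. f (twist C x))"
proof -
  note sL = lideal_subspace[OF L] and gL = lideal_graded[OF L] and hL = lideal_hom[OF L]
  have tw: "twist C ` L \<subseteq> L" using twist_mem[OF gL sL] by blast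
  have "f (twist C (cmp C b x)) = cmp C b (f (twist C x))" if b: "b \<in> hom C m" and x: "x \<in> L" for b x
  proof -
    obtain b0 b1 where bs: "b0 \<in> hom C m" "b0 \<in> ev C" "b1 \<in> hom C m" "b1 \<in> od C" "b = b0 + b1"
      using gradedE[OF hom_graded b] by metis
    define t where "t = twist C x"
    have t: "t \<in> L" "t \<in> hom C m" "f t \<in> hom C m" using tw x hL f(2) unfolding t_def by blast+
    have "twist C (cmp C b x) = twist C (cmp C b0 x) + twist C (cmp C b1 x)"
      using cmp_distrib_right[OF bs(1,3)] x hL bs(5) linear_onD(1)[OF linear_on_twist[OF gL]]
        lideal_cmp[OF L] bs(1,3) by (simp add: subset_iff)
    also have "\<dots> = cmp C b0 t + - cmp C b1 t"
      using twist_cmp bs x hL unfolding t_def by (simp add: subset_iff)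
    finally have "f (twist C (cmp C b x)) = f (cmp C b0 t) + f (- cmp C b1 t)"
      using linear_onD(1)[OF f(1) lideal_cmp[OF L bs(1) t(1)]
          subspace_neg[OF sL lideal_cmp[OF L bs(3) t(1)]]]
      by (simp only:)
    also have "\<dots> = cmp C b0 (f t) + cmp C b1 (f t)"
      using linear_on_neg[OF sL f(1) lideal_cmp[OF L bs(3) t(1)]] ev[OF bs(1,2) t(1)] od[OF bs(3,4) t(1)]
      by simp
    also have "\<dots> = cmp C b (f t)" using cmp_distrib_right[OF bs(1,3) t(3)] bs(5) by simp
    finally show ?thesis unfolding t_def .
  qed
  then show ?thesis
    unfolding lmod_hom_def using linear_on_comp[OF linear_on_twist[OF gL] f(1) tw] by blast
qed

lemma lmod_hom_twist_signed:
  assumes L: "lideal C m L" and g: "lmod_hom C m L g" and b: "b \<in> hom C m" and x: "x \<in> L"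
  shows "b \<in> ev C \<Longrightarrow> g (twist C (cmp C b x)) = cmp C b (g (twist C x))"
    and "b \<in> od C \<Longrightarrow> g (twist C (cmp C b x)) = - cmp C b (g (twist C x))"
proof -
  have t: "twist C x \<in> L" using twist_mem[OF lideal_graded[OF L] lideal_subspace[OF L] x] .
  have xh: "x \<in> hom C m" using x lideal_hom[OF L] by blast
  show "b \<in> ev C \<Longrightarrow> g (twist C (cmp C b x)) = cmp C b (g (twist C x))"
    using twist_cmp(1)[OF b xh] lmod_homD(2)[OF g b t] by simp
  show "b \<in> od C \<Longrightarrow> g (twist C (cmp C b x)) = - cmp C b (g (twist C x))"
    using twist_cmp(2)[OF b xh] lmod_homD(2)[OF g b t]
      linear_on_neg[OF lideal_subspace[OF L] lmod_homD(1)[OF g] lideal_cmp[OF L b t]] by simp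
qed

lemma liso_iff_graded_liso:
  assumes L: "lideal C m L" and X: "X \<subseteq> hom C m"
  shows "liso C m L X \<longleftrightarrow> graded_liso C m L X"
proof
  note gL = lideal_graded[OF L] and sL = lideal_subspace[OF L]
  have tw_par: "twist C x \<in> L \<inter> ev C" if "x \<in> L \<inter> ev C" for x using that twist_ev by simp
  have tw_par': "twist C x \<in> L \<inter> od C" if "x \<in> L \<inter> od C" for x
    using that twist_od subspace_neg[OF sL] subspace_neg[OF od_subspace] by simp
  have bij_tw: "bij_betw (\<lambda>x. f (twist C x)) L X" if "bij_betw f L X" for f
    using bij_betw_trans[OF bij_betw_twist[OF gL sL] that] by (simp add: comp_def)
  show "graded_liso C m L X" if iso: "liso C m L X"
  proof -
    obtain f where f: "bij_betw f L X" "linear_on (sc C) L f"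
      and "(\<forall>x\<in>L \<inter> ev C. f x \<in> ev C) \<and> (\<forall>x\<in>L \<inter> od C. f x \<in> od C) \<and>
           (\<forall>b\<in>hom C m. \<forall>x\<in>L. f (cmp C b x) = cmp C b (f x))
         \<or> (\<forall>x\<in>L \<inter> ev C. f x \<in> od C) \<and> (\<forall>x\<in>L \<inter> od C. f x \<in> ev C) \<and>
           (\<forall>b\<in>hom C m \<inter> ev C. \<forall>x\<in>L. f (cmp C b x) = cmp C b (f x)) \<and>
           (\<forall>b\<in>hom C m \<inter> od C. \<forall>x\<in>L. f (cmp C b x) = - cmp C b (f x))"
      using iso unfolding liso_def linear_on_def by blast
    then show ?thesis
    proof (elim disjE conjE)
      assume "\<forall>x\<in>L \<inter> ev C. f x \<in> ev C" "\<forall>x\<in>L \<inter> od C. f x \<in> od C"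
        "\<forall>b\<in>hom C m. \<forall>x\<in>L. f (cmp C b x) = cmp C b (f x)"
      then show ?thesis
        using f unfolding graded_liso_def graded_lmod_hom_def lmod_hom_def by blast
    next
      assume par: "\<forall>x\<in>L \<inter> ev C. f x \<in> od C" "\<forall>x\<in>L \<inter> od C. f x \<in> ev C"
        and "\<forall>b\<in>hom C m \<inter> ev C. \<forall>x\<in>L. f (cmp C b x) = cmp C b (f x)"
          "\<forall>b\<in>hom C m \<inter> od C. \<forall>x\<in>L. f (cmp C b x) = - cmp C b (f x)"
      then have "lmod_hom C m L (\<lambda>x. f (twist C x))"
        using signed_lmod_hom_twist[OF L f(2)] bij_betw_imp_surj_on[OF f(1)] X by blast
      moreover have "(\<lambda>x. f (twist C x)) ` (L \<inter> ev C) \<subseteq> od C"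
        "(\<lambda>x. f (twist C x)) ` (L \<inter> od C) \<subseteq> ev C"
        using par tw_par tw_par' by blast+
      ultimately show ?thesis
        using bij_tw[OF f(1)] unfolding graded_liso_def graded_lmod_hom_def by blast
    qed
  qed
  show "liso C m L X" if iso: "graded_liso C m L X"
  proof -
    obtain g where g: "bij_betw g L X" "lmod_hom C m L g"
      and "g ` (L \<inter> ev C) \<subseteq> ev C \<and> g ` (L \<inter> od C) \<subseteq> od C \<or>
           g ` (L \<inter> ev C) \<subseteq> od C \<and> g ` (L \<inter> od C) \<subseteq> ev C"
      using iso unfolding graded_liso_def graded_lmod_hom_def by blast
    then show ?thesis
    proof (elim disjE conjE)
      assume "g ` (L \<inter> ev C) \<subseteq> ev C" "g ` (L \<inter> od C) \<subseteq> od C"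
      then show ?thesis using g unfolding liso_def lmod_hom_def linear_on_def by blast
    next
      assume par: "g ` (L \<inter> ev C) \<subseteq> od C" "g ` (L \<inter> od C) \<subseteq> ev C"
      let ?f = "\<lambda>x. g (twist C x)"
      have "linear_on (sc C) L ?f"
        using linear_on_comp[OF linear_on_twist[OF gL] lmod_homD(1)[OF g(2)]] twist_mem[OF gL sL]
        by blast
      moreover have "\<forall>x\<in>L \<inter> ev C. ?f x \<in> od C" "\<forall>x\<in>L \<inter> od C. ?f x \<in> ev C"
        using par tw_par tw_par' by blast+
      moreover have "\<forall>b\<in>hom C m \<inter> ev C. \<forall>x\<in>L. ?f (cmp C b x) = cmp C b (?f x)"
        "\<forall>b\<in>hom C m \<inter> od C. \<forall>x\<in>L. ?f (cmp C b x) = - cmp C b (?f x)"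
        using lmod_hom_twist_signed[OF L g(2)] by blast+
      ultimately show ?thesis
        using bij_tw[OF g(1)] unfolding liso_def linear_on_def by blast
    qed
  qed
qed

lemma lideal_image:
  assumes L: "lideal C m L" and f: "graded_lmod_hom C m L f" "f ` L \<subseteq> hom C m"
  shows "lideal C m (f ` L)"
proof -
  have lin: "linear_on (sc C) L f"
    and comm: "\<And>b x. b \<in> hom C m \<Longrightarrow> x \<in> L \<Longrightarrow> f (cmp C b x) = cmp C b (f x)"
    and par: "f ` (L \<inter> ev C) \<subseteq> ev C \<and> f ` (L \<inter> od C) \<subseteq> od C \<or>
              f ` (L \<inter> ev C) \<subseteq> od C \<and> f ` (L \<inter> od C) \<subseteq> ev C"
    using f(1) unfolding graded_lmod_hom_def lmod_hom_def by blast+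
  have "graded C (f ` L)"
    unfolding graded_def
  proof
    fix y assume "y \<in> f ` L"
    then obtain x where "x \<in> L" "y = f x" by blast
    then obtain a b where ab: "a \<in> L" "a \<in> ev C" "b \<in> L" "b \<in> od C" "y = f a + f b"
      using gradedE[OF lideal_graded[OF L]] linear_onD(1)[OF lin] by metis
    from par show "\<exists>a\<in>f ` L \<inter> ev C. \<exists>b\<in>f ` L \<inter> od C. y = a + b"
    proof (elim disjE conjE)
      assume "f ` (L \<inter> ev C) \<subseteq> ev C" "f ` (L \<inter> od C) \<subseteq> od C"
      then show ?thesis using ab by blast
    next
      assume "f ` (L \<inter> ev C) \<subseteq> od C" "f ` (L \<inter> od C) \<subseteq> ev C"
      moreover have "y = f b + f a" using ab(5) by (simp add: add.commute)
      ultimately show ?thesis using ab(1-4) by blast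
    qed
  qed
  moreover have "cmp C b (f x) \<in> f ` L" if "b \<in> hom C m" "x \<in> L" for b x
    using comm[OF that, symmetric] lideal_cmp[OF L that] by (rule image_eqI)
  ultimately show ?thesis
    unfolding lideal_def using subspace_linear_image[OF lideal_subspace[OF L] lin] f(2) by blast
qed

lemma lideal_preimage:
  assumes L: "lideal C m L" and f: "graded_lmod_hom C m L f" and K: "lideal C m K"
  shows "lideal C m {x \<in> L. f x \<in> K}"
proof -
  let ?P = "{x \<in> L. f x \<in> K}"
  have lin: "linear_on (sc C) L f"
    and comm: "\<And>b x. b \<in> hom C m \<Longrightarrow> x \<in> L \<Longrightarrow> f (cmp C b x) = cmp C b (f x)"
    and par: "f ` (L \<inter> ev C) \<subseteq> ev C \<and> f ` (L \<inter> od C) \<subseteq> od C \<or>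
              f ` (L \<inter> ev C) \<subseteq> od C \<and> f ` (L \<inter> od C) \<subseteq> ev C"
    using f unfolding graded_lmod_hom_def lmod_hom_def by blast+
  note sL = lideal_subspace[OF L] and sK = lideal_subspace[OF K]
  have "subspace ?P"
  proof (rule subspaceI)
    show "0 \<in> ?P" using linear_on_0[OF sL lin] subspace_0[OF sL] subspace_0[OF sK] by simp
  next
    fix x y assume "x \<in> ?P" "y \<in> ?P"
    then show "x + y \<in> ?P"
      using linear_onD(1)[OF lin] subspace_add[OF sL] subspace_add[OF sK] by simp
  next
    fix c x assume "x \<in> ?P"
    then show "sc C c x \<in> ?P"
      using linear_onD(2)[OF lin] subspace_scale[OF sL] subspace_scale[OF sK] by simp
  qed
  moreover have "graded C ?P"
    unfolding graded_def
  proof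
    fix x assume x: "x \<in> ?P"
    then obtain a b where ab: "a \<in> L" "a \<in> ev C" "b \<in> L" "b \<in> od C" "x = a + b"
      using gradedE[OF lideal_graded[OF L]] by blast
    have fx: "f a + f b \<in> K" using x ab linear_onD(1)[OF lin] by simp
    from par have "f a \<in> K \<and> f b \<in> K"
    proof (elim disjE conjE)
      assume "f ` (L \<inter> ev C) \<subseteq> ev C" "f ` (L \<inter> od C) \<subseteq> od C"
      then show ?thesis using graded_parts[OF lideal_graded[OF K] _ _ fx] ab by blast
    next
      assume "f ` (L \<inter> ev C) \<subseteq> od C" "f ` (L \<inter> od C) \<subseteq> ev C"
      moreover have "f b + f a \<in> K" using fx by (simp add: add.commute)
      ultimately show ?thesis using graded_parts[OF lideal_graded[OF K]] ab by blast
    qed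
    then show "\<exists>a\<in>?P \<inter> ev C. \<exists>b\<in>?P \<inter> od C. x = a + b" using ab by blast
  qed
  moreover have "cmp C b x \<in> ?P" if "b \<in> hom C m" "x \<in> ?P" for b x
    using that comm lideal_cmp[OF L] lideal_cmp[OF K] by simp
  ultimately show ?thesis unfolding lideal_def using lideal_hom[OF L] by blast
qed

lemma mlideal_image:
  assumes L: "mlideal C m L" and f: "graded_lmod_hom C m L f" "f ` L \<subseteq> hom C m"
  shows "f ` L = {0} \<or> mlideal C m (f ` L) \<and> graded_liso C m L (f ` L)"
proof -
  have lL: "lideal C m L" and L0: "L \<noteq> {0}"
    and min: "\<And>K. lideal C m K \<Longrightarrow> K \<subseteq> L \<Longrightarrow> K = {0} \<or> K = L"
    using L unfolding mlideal_def by blast+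
  have lin: "linear_on (sc C) L f" using f(1) unfolding graded_lmod_hom_def lmod_hom_def by blast
  note sL = lideal_subspace[OF lL]
  have f0: "f 0 = 0" and z: "0 \<in> L" using linear_on_0[OF sL lin] subspace_0[OF sL] .
  have pre: "{x \<in> L. f x \<in> K} = {0} \<or> {x \<in> L. f x \<in> K} = L" if "lideal C m K" for K
    using min lideal_preimage[OF lL f(1) that] by blast
  from pre[OF lideal_zero] show ?thesis
  proof
    assume "{x \<in> L. f x \<in> {0}} = L"
    then have "f ` L = {0}" using z f0 by auto
    then show ?thesis ..
  next
    assume ker: "{x \<in> L. f x \<in> {0}} = {0}"
    have inj: "inj_on f L"
    proof (rule inj_onI)
      fix x y assume "x \<in> L" "y \<in> L" "f x = f y"
      then have "x - y \<in> {x \<in> L. f x \<in> {0}}"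
        using linear_on_diff[OF sL lin] subspace_diff[OF sL] by simp
      then have "x - y = 0" using ker by blast
      then show "x = y" by simp
    qed
    have "mlideal C m (f ` L)"
      unfolding mlideal_def
    proof (intro conjI allI impI)
      show "lideal C m (f ` L)" using lideal_image[OF lL f] .
      show "f ` L \<noteq> {0}"
      proof
        assume "f ` L = {0}"
        obtain x where "x \<in> L" "x \<noteq> 0" using L0 z by blast
        moreover have "f x = f 0" using \<open>f ` L = {0}\<close> \<open>x \<in> L\<close> f0 by (metis imageI singletonD)
        ultimately show False using inj_onD[OF inj _ _ z] by blast
      qed
    next
      fix K assume "lideal C m K \<and> K \<subseteq> f ` L"
      then have lK: "lideal C m K" and K: "K \<subseteq> f ` L" by blast+
      from pre[OF lK] show "K = {0} \<or> K = f ` L"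
      proof
        assume P0: "{x \<in> L. f x \<in> K} = {0}"
        have "k = 0" if k: "k \<in> K" for k
        proof -
          obtain x where "x \<in> L" "k = f x" using K k by blast
          then have "x \<in> {x \<in> L. f x \<in> K}" using k by simp
          then show "k = 0" using P0 f0 \<open>k = f x\<close> by simp
        qed
        then show ?thesis using subspace_0[OF lideal_subspace[OF lK]] by blast
      next
        assume "{x \<in> L. f x \<in> K} = L"
        then have "f ` L \<subseteq> K" by blast
        then show ?thesis using K by blast
      qed
    qed
    moreover have "graded_liso C m L (f ` L)"
      using inj f(1) unfolding graded_liso_def bij_betw_def by blast
    ultimately show ?thesis by blast
  qed
qed

lemma graded_lmod_hom_cmp_right:
  assumes L: "L \<subseteq> hom C m" and b: "b \<in> hom C m" "homog C b"
  shows "graded_lmod_hom C m L (\<lambda>x. cmp C x b)"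
proof -
  have "cmp C (cmp C a x) b = cmp C a (cmp C x b)" if "a \<in> hom C m" "x \<in> L" for a x
    using cmp_assoc[OF that(1) _ b(1)] L that(2) by blast
  then have "lmod_hom C m L (\<lambda>x. cmp C x b)"
    unfolding lmod_hom_def using linear_on_subset[OF linear_on_cmp_right[OF b(1)] L] by blast
  moreover from b(2) have
    "(\<lambda>x. cmp C x b) ` (L \<inter> ev C) \<subseteq> ev C \<and> (\<lambda>x. cmp C x b) ` (L \<inter> od C) \<subseteq> od C \<or>
     (\<lambda>x. cmp C x b) ` (L \<inter> ev C) \<subseteq> od C \<and> (\<lambda>x. cmp C x b) ` (L \<inter> od C) \<subseteq> ev C"
    unfolding homog_def
  proof (elim disjE)
    assume "b \<in> ev C"
    then have "(\<lambda>x. cmp C x b) ` (L \<inter> ev C) \<subseteq> ev C" "(\<lambda>x. cmp C x b) ` (L \<inter> od C) \<subseteq> od C"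
      using L cmp_ev_ev[OF _ b(1)] cmp_od_ev[OF _ b(1)] by blast+
    then show ?thesis by blast
  next
    assume "b \<in> od C"
    then have "(\<lambda>x. cmp C x b) ` (L \<inter> ev C) \<subseteq> od C" "(\<lambda>x. cmp C x b) ` (L \<inter> od C) \<subseteq> ev C"
      using L cmp_ev_od[OF _ b(1)] cmp_od_od[OF _ b(1)] by blast+
    then show ?thesis by blast
  qed
  ultimately show ?thesis unfolding graded_lmod_hom_def by blast
qed

section \<open>Isotypic components\<close>

lemma liso_refl: "liso C m L L"
  unfolding liso_def by (rule exI[of _ id]) simp

lemma mlideal_lideal: "mlideal C m L \<Longrightarrow> lideal C m L"
  unfolding mlideal_def by blast

lemma ex_Lam_class:
  assumes "mlideal C m L"
  shows "\<exists>mu\<in>Lam C m. L \<in> mu"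
proof
  show "{L'. mlideal C m L' \<and> liso C m L L'} \<in> Lam C m" unfolding Lam_def using assms by blast
  show "L \<in> {L'. mlideal C m L' \<and> liso C m L L'}" using assms liso_refl by simp
qed

lemma LamE:
  assumes "mu \<in> Lam C m"
  obtains L0 where "mlideal C m L0" "mu = {L'. mlideal C m L' \<and> liso C m L0 L'}"
  using assms unfolding Lam_def by auto

lemma Lam_class_nonemptyE:
  assumes "mu \<in> Lam C m"
  obtains L where "L \<in> mu"
proof -
  obtain L0 where "mlideal C m L0" "mu = {L'. mlideal C m L' \<and> liso C m L0 L'}"
    by (rule LamE[OF assms])
  then show ?thesis using that liso_refl by blast
qed

lemma Lam_mem_iff:
  assumes "mu \<in> Lam C m" "L \<in> mu"
  shows "L' \<in> mu \<longleftrightarrow> mlideal C m L' \<and> graded_liso C m L L'"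
proof -
  obtain L0 where L0: "mlideal C m L0" and mu: "mu = {L'. mlideal C m L' \<and> liso C m L0 L'}"
    by (rule LamE[OF assms(1)])
  have iso_iff: "liso C m L0 K \<longleftrightarrow> graded_liso C m L0 K" if "mlideal C m K" for K
    using liso_iff_graded_liso[OF mlideal_lideal[OF L0] lideal_hom[OF mlideal_lideal[OF that]]] .
  have L: "mlideal C m L" "graded_liso C m L0 L" using assms(2) iso_iff unfolding mu by auto
  have "graded_liso C m L0 L' \<longleftrightarrow> graded_liso C m L L'" for L'
    using graded_liso_trans[OF graded_liso_sym[OF mlideal_lideal[OF L0] L(2)]]
      graded_liso_trans[OF L(2)] by blast
  then show ?thesis unfolding mu using iso_iff by blast
qed

lemma Lam_mlideal: "mu \<in> Lam C m \<Longrightarrow> L \<in> mu \<Longrightarrow> mlideal C m L"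
  using Lam_mem_iff by blast

lemma Union_Lam_hom: "mu \<in> Lam C m \<Longrightarrow> \<Union>mu \<subseteq> hom C m"
  using Lam_mlideal mlideal_lideal lideal_hom by blast

lemma Jlam_hom: "mu \<in> Lam C m \<Longrightarrow> Jlam C mu \<subseteq> hom C m"
  unfolding Jlam_def using span_minimal[OF Union_Lam_hom hom_subspace] .

lemma Jlam_cmp_right:
  assumes mu: "mu \<in> Lam C m" and b: "b \<in> hom C m" and x: "x \<in> Jlam C mu"
  shows "cmp C x b \<in> Jlam C mu"
proof -
  have homog_case: "cmp C y c \<in> Jlam C mu" if c: "c \<in> hom C m" "homog C c" and y: "y \<in> Jlam C mu" for c y
  proof -
    have "(\<lambda>x. cmp C x c) ` L \<subseteq> Jlam C mu" if L: "L \<in> mu" for L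
    proof -
      have Lh: "L \<subseteq> hom C m" using Union_Lam_hom[OF mu] L by blast
      have "(\<lambda>x. cmp C x c) ` L \<subseteq> hom C m" using Lh cmp_closed[OF _ c(1)] by blast
      from mlideal_image[OF Lam_mlideal[OF mu L] graded_lmod_hom_cmp_right[OF Lh c] this]
      show ?thesis
      proof
        assume "(\<lambda>x. cmp C x c) ` L = {0}"
        then show ?thesis unfolding Jlam_def using span_zero by simp
      next
        assume "mlideal C m ((\<lambda>x. cmp C x c) ` L) \<and> graded_liso C m L ((\<lambda>x. cmp C x c) ` L)"
        then have "(\<lambda>x. cmp C x c) ` L \<in> mu" using Lam_mem_iff[OF mu L] by blast
        then show ?thesis unfolding Jlam_def using span_superset by blast
      qed
    qed
    then have "(\<lambda>x. cmp C x c) ` \<Union>mu \<subseteq> Jlam C mu" by blast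
    then show ?thesis
      using linear_on_span_subset[OF hom_subspace linear_on_cmp_right[OF c(1)] Union_Lam_hom[OF mu]] y
      unfolding Jlam_def by blast
  qed
  obtain b0 b1 where bs: "b0 \<in> hom C m" "b0 \<in> ev C" "b1 \<in> hom C m" "b1 \<in> od C" "b = b0 + b1"
    using gradedE[OF hom_graded b] by metis
  have "cmp C x b = cmp C x b0 + cmp C x b1"
    using cmp_distrib_left[OF bs(1,3)] Jlam_hom[OF mu] x bs(5) by blast
  then show ?thesis
    using homog_case[OF bs(1) _ x] homog_case[OF bs(3) _ x] bs(2,4) span_add
    unfolding homog_def Jlam_def by simp
qed

lemma tideal_Jlam:
  assumes "mu \<in> Lam C m"
  shows "tideal C m (Jlam C mu)"
proof -
  have "lideal C m (Jlam C mu)"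
    unfolding Jlam_def using lideal_span_Union Lam_mlideal[OF assms] mlideal_lideal by blast
  then show ?thesis
    unfolding tideal_def lideal_def using Jlam_cmp_right[OF assms] by blast
qed

section \<open>Semisimplicity\<close>

lemma dim_less_of_psubset:
  assumes "subspace K'" "subspace K" "K' \<subset> K" "K \<subseteq> span W" "finite W"
  shows "dim K' < dim K"
proof -
  obtain B' where B': "B' \<subseteq> K'" "independent B'" "K' \<subseteq> span B'"
    by (rule maximal_independent_subset)
  obtain B where B: "B' \<subseteq> B" "B \<subseteq> K" "independent B" "K \<subseteq> span B"
    using maximal_independent_subset_extend[OF _ B'(2), of K] B'(1) assms(3) by blast
  have "finite B" using independent_span_bound[OF assms(5) B(3)] B(2) assms(4) by blast
  moreover have "B' \<noteq> B"
  proof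
    assume "B' = B"
    then have "K \<subseteq> K'" using B(4) span_minimal[OF B'(1) assms(1)] by blast
    then show False using assms(3) by blast
  qed
  ultimately have "card B' < card B" using B(1) psubset_card_mono by blast
  then show ?thesis using basis_card_eq_dim B' B(2-4) by metis
qed

lemma ex_mlideal_subset:
  assumes "findim C m" "lideal C m K" "K \<noteq> {0}"
  shows "\<exists>L. mlideal C m L \<and> L \<subseteq> K"
proof -
  obtain W where W: "finite W" "span W = hom C m"
    using assms(1) unfolding findim_def by blast
  show ?thesis using assms(2,3)
  proof (induction "dim K" arbitrary: K rule: less_induct)
    case less
    show ?case
    proof (cases "mlideal C m K")
      case False
      then obtain K' where K': "lideal C m K'" "K' \<subseteq> K" "K' \<noteq> {0}" "K' \<noteq> K"
        using less.prems unfolding mlideal_def by blast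
      have "dim K' < dim K"
        using dim_less_of_psubset[OF lideal_subspace[OF K'(1)] lideal_subspace[OF less.prems(1)] _ _ W(1)]
          K'(2,4) lideal_hom[OF less.prems(1)] W(2) by blast
      then show ?thesis using less.hyps[of K'] K' by blast
    qed blast
  qed
qed

lemma semisimpleE:
  assumes "semisimple C m" "lideal C m L"
  obtains L' where "lideal C m L'" "L \<inter> L' = {0}" "hom C m = {x + y | x y. x \<in> L \<and> y \<in> L'}"
proof -
  have "\<exists>L'. lideal C m L' \<and> L \<inter> L' = {0} \<and> hom C m = {x + y | x y. x \<in> L \<and> y \<in> L'}"
    by (rule mp[OF spec[OF assms(1)[unfolded semisimple_def]] assms(2)])
  then show ?thesis using that by (elim exE conjE)
qed

lemma lideal_subset_span_mlideals:
  assumes fin: "findim C m" and ss: "semisimple C m" and I: "lideal C m I"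
  shows "I \<subseteq> span (\<Union>{L. mlideal C m L \<and> L \<subseteq> I})"
proof -
  define M where "M = span (\<Union>{L. mlideal C m L \<and> L \<subseteq> I})"
  have "lideal C m M" unfolding M_def by (rule lideal_span_Union) (blast dest: mlideal_lideal)
  then obtain M' where M': "lideal C m M'" "M \<inter> M' = {0}" "hom C m = {x + y | x y. x \<in> M \<and> y \<in> M'}"
    by (rule semisimpleE[OF ss])
  have MI: "M \<subseteq> I" unfolding M_def by (rule span_minimal[OF _ lideal_subspace[OF I]]) blast
  have "M' \<inter> I = {0}"
  proof (rule ccontr)
    assume "M' \<inter> I \<noteq> {0}"
    then obtain L where L: "mlideal C m L" "L \<subseteq> M' \<inter> I"
      using ex_mlideal_subset[OF fin lideal_inter[OF M'(1) I]] by blast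
    then have "L \<subseteq> \<Union>{L. mlideal C m L \<and> L \<subseteq> I}" by blast
    then have "L \<subseteq> M" unfolding M_def using span_superset by (rule subset_trans)
    then have "L \<subseteq> {0}" using L(2) M'(2) by blast
    then have "L = {0}" using subspace_0[OF lideal_subspace[OF mlideal_lideal[OF L(1)]]] by blast
    then show False using L(1) by (simp add: mlideal_def)
  qed
  show ?thesis
  proof
    fix x assume x: "x \<in> I"
    then have "x \<in> {x + y | x y. x \<in> M \<and> y \<in> M'}"
      using lideal_hom[OF I] unfolding M'(3)[symmetric] by blast
    then obtain u v where uv: "u \<in> M" "v \<in> M'" "x = u + v" by blast
    have "v = x - u" using uv(3) by simp
    then have "v \<in> I" using subspace_diff[OF lideal_subspace[OF I] x] MI uv(1) by blast
    then have "v = 0" using \<open>M' \<inter> I = {0}\<close> uv(2) by blast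
    then show "x \<in> span (\<Union>{L. mlideal C m L \<and> L \<subseteq> I})" using uv unfolding M_def by simp
  qed
qed

lemma lideal_subset_span_Jlam:
  assumes "findim C m" "semisimple C m" "lideal C m I"
  shows "I \<subseteq> span (\<Union>{Jlam C mu | mu. mu \<in> Lam C m \<and> occurs mu I})"
proof -
  have "\<Union>{L. mlideal C m L \<and> L \<subseteq> I} \<subseteq> \<Union>{Jlam C mu | mu. mu \<in> Lam C m \<and> occurs mu I}"
  proof
    fix x assume "x \<in> \<Union>{L. mlideal C m L \<and> L \<subseteq> I}"
    then obtain L where L: "mlideal C m L" "L \<subseteq> I" "x \<in> L" by blast
    then obtain mu where mu: "mu \<in> Lam C m" "L \<in> mu" using ex_Lam_class by blast
    then have "occurs mu I" unfolding occurs_def using L(2) by blast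
    moreover have "x \<in> Jlam C mu" unfolding Jlam_def using L(3) mu(2) span_base by blast
    ultimately show "x \<in> \<Union>{Jlam C mu | mu. mu \<in> Lam C m \<and> occurs mu I}" using mu(1) by blast
  qed
  then show ?thesis using lideal_subset_span_mlideals[OF assms] span_mono by blast
qed

lemma cmp_right_unit_of_complement:
  assumes L: "lideal C m L" and L': "lideal C m L'" and "L \<inter> L' = {0}"
    and e: "e \<in> L" "e' \<in> L'" "idn C m = e + e'" and x: "x \<in> L"
  shows "cmp C x e = x"
proof -
  have xh: "x \<in> hom C m" using x lideal_hom[OF L] by blast
  have eh: "e \<in> hom C m" "e' \<in> hom C m" using e lideal_hom L L' by blast+
  have sum: "x = cmp C x e + cmp C x e'"
    using cmp_idn_right[OF xh] cmp_distrib_left[OF eh xh] e(3) by simp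
  then have "cmp C x e' = x - cmp C x e" by (simp add: algebra_simps)
  then have "cmp C x e' \<in> L"
    using subspace_diff[OF lideal_subspace[OF L] x lideal_cmp[OF L xh e(1)]] by simp
  moreover have "cmp C x e' \<in> L'" using lideal_cmp[OF L' xh e(2)] .
  ultimately have "cmp C x e' = 0" using assms(3) by blast
  then show ?thesis using sum by simp
qed

lemma lmod_hom_image_subset_tideal:
  assumes ss: "semisimple C m" and L: "lideal C m L" and f: "lmod_hom C m L f" "f ` L \<subseteq> hom C m"
    and T: "tideal C m T" "L \<subseteq> T"
  shows "f ` L \<subseteq> T"
proof
  obtain L' where L': "lideal C m L'" "L \<inter> L' = {0}" "hom C m = {x + y | x y. x \<in> L \<and> y \<in> L'}"
    by (rule semisimpleE[OF ss L])
  have "idn C m \<in> {x + y | x y. x \<in> L \<and> y \<in> L'}" using idn_hom unfolding L'(3)[symmetric] .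
  then obtain e e' where e: "e \<in> L" "e' \<in> L'" "idn C m = e + e'" by blast
  fix y assume "y \<in> f ` L"
  then obtain x where x: "x \<in> L" "y = f x" by blast
  have xh: "x \<in> hom C m" and fe: "f e \<in> hom C m" using x(1) e(1) lideal_hom[OF L] f(2) by blast+
  have "y = f (cmp C x e)" using cmp_right_unit_of_complement[OF L L'(1,2) e x(1)] x(2) by simp
  also have "\<dots> = cmp C x (f e)" using lmod_homD(2)[OF f(1) xh e(1)] .
  finally show "y \<in> T" using tideal_cmp_right[OF T(1) fe] x(1) T(2) by blast
qed

lemma Jlam_subset_tideal:
  assumes ss: "semisimple C m" and mu: "mu \<in> Lam C m" "L \<in> mu" and T: "tideal C m T" "L \<subseteq> T"
  shows "Jlam C mu \<subseteq> T"
proof -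
  have lL: "lideal C m L" using Lam_mlideal[OF mu] mlideal_lideal by blast
  have "L' \<subseteq> T" if L': "L' \<in> mu" for L'
  proof -
    have "graded_liso C m L L'" using Lam_mem_iff[OF mu] L' by blast
    then obtain f where f: "bij_betw f L L'" "graded_lmod_hom C m L f"
      unfolding graded_liso_def by blast
    have img: "f ` L = L'" using bij_betw_imp_surj_on[OF f(1)] .
    have "lmod_hom C m L f" using f(2) unfolding graded_lmod_hom_def by blast
    moreover have "f ` L \<subseteq> hom C m" using Union_Lam_hom[OF mu(1)] L' img by blast
    ultimately show ?thesis using lmod_hom_image_subset_tideal[OF ss lL _ _ T] img by blast
  qed
  then have "\<Union>mu \<subseteq> T" by blast
  then show ?thesis unfolding Jlam_def using span_minimal tideal_subspace[OF T(1)] by blast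
qed

section \<open>Induced left ideals\<close>

lemma amg_hom_Suc: "a \<in> hom C 1 \<Longrightarrow> s \<in> hom C n \<Longrightarrow> amg C a s \<in> hom C (Suc n)"
  using amg_hom[of a 1 s n] by simp

lemma amg_eq_cmp_amg_idn:
  assumes a: "a \<in> hom C p" and s: "s \<in> hom C q"
  shows "amg C a s = cmp C (amg C a (idn C q)) (amg C (idn C p) s)"
  \<comment> \<open>Identities are even, so no Koszul sign arises unless idn C q is also odd, i.e. zero.\<close>
proof (cases "idn C q \<in> od C")
  case True
  then have "idn C q = 0" using idn_ev ev_inter_od by blast
  then have "s = 0" using cmp_idn_left[OF s] cmp_0_left[OF s] by simp
  then show ?thesis
    using linear_on_0[OF hom_subspace linear_on_amg[OF a]]
      linear_on_0[OF hom_subspace linear_on_amg[OF idn_hom]] cmp_0_right[OF amg_hom[OF a idn_hom]]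
    by simp
next
  case False
  then show ?thesis
    using amg_interchange[OF a idn_hom idn_hom s] idn_ev cmp_idn_right[OF a] cmp_idn_left[OF s]
    unfolding homog_def by simp
qed

lemma amg_idn_mem_Ind: "S \<subseteq> hom C n \<Longrightarrow> s \<in> S \<Longrightarrow> amg C (idn C 1) s \<in> Ind C n S"
  unfolding Ind_def
  by (rule span_base, rule CollectI, intro exI[of _ "idn C (Suc n)"] exI[of _ "idn C 1"] exI[of _ s])
    (auto simp: idn_hom cmp_idn_left amg_hom_Suc)

lemma Ind_subset_tideal:
  assumes S: "S \<subseteq> hom C n" and T: "tideal C (Suc n) T" "amg C (idn C 1) ` S \<subseteq> T"
  shows "Ind C n S \<subseteq> T"
  unfolding Ind_def
proof (rule span_minimal[OF _ tideal_subspace[OF T(1)]], safe)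
  fix x a s assume xas: "x \<in> hom C (Suc n)" "a \<in> hom C 1" "s \<in> S"
  have sh: "s \<in> hom C n" using xas(3) S by blast
  have "amg C a s = cmp C (amg C a (idn C n)) (amg C (idn C 1) s)"
    using amg_eq_cmp_amg_idn[OF xas(2) sh] .
  then have "amg C a s \<in> T"
    using tideal_cmp_left[OF T(1) amg_hom_Suc[OF xas(2) idn_hom]] T(2) xas(3) by auto
  then show "cmp C x (amg C a s) \<in> T" using tideal_cmp_left[OF T(1) xas(1)] by blast
qed

lemma Ind_lideal:
  assumes S: "lideal C n S"
  shows "lideal C (Suc n) (Ind C n S)"
proof -
  define G where "G = {cmp C x (amg C a s) | x a s. x \<in> hom C (Suc n) \<and> a \<in> hom C 1 \<and> s \<in> S}"
  define H where "H = {cmp C x (amg C a s) | x a s.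
    x \<in> hom C (Suc n) \<and> homog C x \<and> a \<in> hom C 1 \<and> homog C a \<and> s \<in> S \<and> homog C s}"
  have Sh: "S \<subseteq> hom C n" using lideal_hom[OF S] .
  have G: "G \<subseteq> hom C (Suc n)"
  proof (unfold G_def, safe)
    fix x a s assume "x \<in> hom C (Suc n)" "a \<in> hom C 1" "s \<in> S"
    then show "cmp C x (amg C a s) \<in> hom C (Suc n)" using cmp_closed amg_hom_Suc Sh by blast
  qed
  have split_s: "cmp C x (amg C a s) \<in> span H"
    if x: "x \<in> hom C (Suc n)" "homog C x" and a: "a \<in> hom C 1" "homog C a" and s: "s \<in> S"
    for x a s
  proof -
    obtain s0 s1 where ss: "s0 \<in> S" "s0 \<in> ev C" "s1 \<in> S" "s1 \<in> od C" "s = s0 + s1"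
      using gradedE[OF lideal_graded[OF S] s] by metis
    have sh: "s0 \<in> hom C n" "s1 \<in> hom C n" using ss(1,3) Sh by blast+
    have "cmp C x (amg C a s) = cmp C x (amg C a s0) + cmp C x (amg C a s1)"
      using amg_distrib_left[OF a(1) sh] cmp_distrib_left[OF amg_hom_Suc[OF a(1) sh(1)]
        amg_hom_Suc[OF a(1) sh(2)] x(1)] ss(5) by simp
    moreover have "cmp C x (amg C a s0) \<in> H" "cmp C x (amg C a s1) \<in> H"
      unfolding H_def using x a ss unfolding homog_def by blast+
    ultimately show ?thesis using span_add span_base by metis
  qed
  have split_a: "cmp C x (amg C a s) \<in> span H"
    if x: "x \<in> hom C (Suc n)" "homog C x" and a: "a \<in> hom C 1" and s: "s \<in> S" for x a s
  proof -
    obtain a0 a1 where as: "a0 \<in> hom C 1" "a0 \<in> ev C" "a1 \<in> hom C 1" "a1 \<in> od C" "a = a0 + a1"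
      using gradedE[OF hom_graded a] by metis
    have sh: "s \<in> hom C n" using s Sh by blast
    have "cmp C x (amg C a s) = cmp C x (amg C a0 s) + cmp C x (amg C a1 s)"
      using amg_distrib_right[OF as(1,3) sh] cmp_distrib_left[OF amg_hom_Suc[OF as(1) sh]
        amg_hom_Suc[OF as(3) sh] x(1)] as(5) by simp
    then show ?thesis using split_s[OF x as(1) _ s] split_s[OF x as(3) _ s]
      as(2,4) span_add unfolding homog_def by simp
  qed
  have "G \<subseteq> span H"
  proof (unfold G_def, safe)
    fix x a s assume xas: "x \<in> hom C (Suc n)" "a \<in> hom C 1" "s \<in> S"
    obtain x0 x1
      where xs: "x0 \<in> hom C (Suc n)" "x0 \<in> ev C" "x1 \<in> hom C (Suc n)" "x1 \<in> od C" "x = x0 + x1"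
      using gradedE[OF hom_graded xas(1)] by metis
    have "amg C a s \<in> hom C (Suc n)" using amg_hom_Suc[OF xas(2)] xas(3) Sh by blast
    then have "cmp C x (amg C a s) = cmp C x0 (amg C a s) + cmp C x1 (amg C a s)"
      using cmp_distrib_right[OF xs(1,3)] xs(5) by simp
    then show "cmp C x (amg C a s) \<in> span H"
      using split_a[OF xs(1) _ xas(2,3)] split_a[OF xs(3) _ xas(2,3)] xs(2,4) span_add
      unfolding homog_def by simp
  qed
  then have "span G \<subseteq> span H" by (simp add: span_minimal)
  moreover have "H \<subseteq> G" unfolding G_def H_def by blast
  then have "span H \<subseteq> span G" by (rule span_mono)
  ultimately have GH: "span G = span H" by (rule antisym)
  have "H \<subseteq> ev C \<union> od C"
  proof (unfold H_def, safe)
    fix x a s assume "x \<in> hom C (Suc n)" "homog C x" "a \<in> hom C 1" "homog C a" "s \<in> S" "homog C s"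
    then have "homog C (cmp C x (amg C a s))"
      using cmp_homog amg_homog amg_hom_Suc Sh by (meson subsetD)
    then show "cmp C x (amg C a s) \<notin> od C \<Longrightarrow> cmp C x (amg C a s) \<in> ev C"
      unfolding homog_def by blast
  qed
  then have "graded C (span G)" unfolding GH by (rule graded_span_homog)
  moreover have "cmp C b ` span G \<subseteq> span G" if b: "b \<in> hom C (Suc n)" for b
  proof (rule linear_on_span_subset[OF hom_subspace linear_on_cmp_left[OF b] G])
    show "cmp C b ` G \<subseteq> span G"
    proof (rule image_subsetI)
      fix g assume "g \<in> G"
      then obtain x a s where xas: "x \<in> hom C (Suc n)" "a \<in> hom C 1" "s \<in> S" "g = cmp C x (amg C a s)"
        unfolding G_def by blast
      have "cmp C b (cmp C x (amg C a s)) = cmp C (cmp C b x) (amg C a s)"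
        using cmp_assoc[OF b xas(1) amg_hom_Suc[OF xas(2)]] xas(3) Sh by auto
      moreover have "cmp C (cmp C b x) (amg C a s) \<in> G"
        unfolding G_def using cmp_closed[OF b xas(1)] xas(2,3) by blast
      ultimately show "cmp C b g \<in> span G" using xas(4) span_base by simp
    qed
  qed simp
  moreover have "Ind C n S = span G" unfolding Ind_def G_def ..
  ultimately show ?thesis unfolding lideal_def using span_minimal[OF G hom_subspace] by auto
qed

section \<open>The two-sided ideal generated by an isotypic component\<close>

lemma amg_idn_Jlam_subset_span_Jlam:
  assumes fin: "findim C (Suc n)" and ss: "semisimple C (Suc n)" and la: "la \<in> Lam C n"
    and P: "\<And>S mu. S \<in> la \<Longrightarrow> mu \<in> Lam C (Suc n) \<Longrightarrow> occurs mu (Ind C n S) \<Longrightarrow> mu \<in> P"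
  shows "amg C (idn C 1) ` Jlam C la \<subseteq> span (\<Union>(Jlam C ` P))"
proof -
  have "amg C (idn C 1) s \<in> span (\<Union>(Jlam C ` P))" if S: "S \<in> la" and s: "s \<in> S" for S s
  proof -
    have lS: "lideal C n S" using Lam_mlideal[OF la S] mlideal_lideal by blast
    have "amg C (idn C 1) s \<in> Ind C n S" using amg_idn_mem_Ind[OF lideal_hom[OF lS] s] .
    also have "\<dots> \<subseteq> span (\<Union>{Jlam C mu | mu. mu \<in> Lam C (Suc n) \<and> occurs mu (Ind C n S)})"
      using lideal_subset_span_Jlam[OF fin ss Ind_lideal[OF lS]] .
    also have "\<dots> \<subseteq> span (\<Union>(Jlam C ` P))" using P[OF S] by (intro span_mono) blast
    finally show ?thesis .
  qed
  then have "amg C (idn C 1) ` \<Union>la \<subseteq> span (\<Union>(Jlam C ` P))" by blast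
  then show ?thesis
    unfolding Jlam_def
    using linear_on_span_subset[OF hom_subspace linear_on_amg[OF idn_hom] Union_Lam_hom[OF la]] by simp
qed

lemma Jlam_subset_tideal_of_occurs:
  assumes ss: "semisimple C (Suc n)" and la: "la \<in> Lam C n" "S \<in> la"
    and mu: "mu \<in> Lam C (Suc n)" "occurs mu (Ind C n S)"
    and I: "tideal C (Suc n) I" "amg C (idn C 1) ` Jlam C la \<subseteq> I"
  shows "Jlam C mu \<subseteq> I"
proof -
  have "S \<subseteq> Jlam C la" unfolding Jlam_def using la(2) span_superset by blast
  then have "amg C (idn C 1) ` S \<subseteq> I" using I(2) by blast
  moreover have "S \<subseteq> hom C n" using Union_Lam_hom[OF la(1)] la(2) by blast
  ultimately have "Ind C n S \<subseteq> I" using Ind_subset_tideal I(1) by blast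
  moreover obtain L where "L \<in> mu" "L \<subseteq> Ind C n S" using mu(2) unfolding occurs_def by blast
  ultimately show ?thesis using Jlam_subset_tideal[OF ss mu(1) \<open>L \<in> mu\<close> I(1)] by blast
qed

lemma (in -) Sigma_id_eqI:
  assumes "tideal C (Suc n) M" "amg C (idn C 1) ` J \<subseteq> M"
    and "\<And>I. tideal C (Suc n) I \<Longrightarrow> amg C (idn C 1) ` J \<subseteq> I \<Longrightarrow> M \<subseteq> I"
  shows "Sigma_id C n J = M"
proof (rule antisym)
  show "Sigma_id C n J \<subseteq> M" unfolding Sigma_id_def using assms(1,2) by (intro Inter_lower) simp
  show "M \<subseteq> Sigma_id C n J" unfolding Sigma_id_def using assms(3) by (intro Inter_greatest) simp
qed

lemma Sigma_id_Jlam: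
  assumes fin: "findim C (Suc n)" and ss: "semisimple C (Suc n)" and la: "la \<in> Lam C n"
    and P: "P \<subseteq> Lam C (Suc n)"
    and occurs_iff: "\<And>S mu. S \<in> la \<Longrightarrow> mu \<in> Lam C (Suc n) \<Longrightarrow> occurs mu (Ind C n S) \<longleftrightarrow> mu \<in> P"
  shows "Sigma_id C n (Jlam C la) = span (\<Union>(Jlam C ` P))"
proof (rule Sigma_id_eqI)
  show "tideal C (Suc n) (span (\<Union>(Jlam C ` P)))"
    by (rule tideal_span_Union) (use P in \<open>auto intro: tideal_Jlam\<close>)
  show "amg C (idn C 1) ` Jlam C la \<subseteq> span (\<Union>(Jlam C ` P))"
    by (rule amg_idn_Jlam_subset_span_Jlam[OF fin ss la]) (simp add: occurs_iff)
next
  fix I assume I: "tideal C (Suc n) I" "amg C (idn C 1) ` Jlam C la \<subseteq> I"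
  obtain S where S: "S \<in> la" by (rule Lam_class_nonemptyE[OF la])
  have "Jlam C mu \<subseteq> I" if mu: "mu \<in> P" for mu
  proof (rule Jlam_subset_tideal_of_occurs[OF ss la S _ _ I])
    show "mu \<in> Lam C (Suc n)" using mu P by blast
    then show "occurs mu (Ind C n S)" using occurs_iff[OF S] mu by simp
  qed
  then have "\<Union>(Jlam C ` P) \<subseteq> I" by blast
  then show "span (\<Union>(Jlam C ` P)) \<subseteq> I" using span_minimal tideal_subspace[OF I(1)] by blast
qed

end

theorem lemma3p6:
  fixes C :: "('k::field, 'a::ab_group_add) msc"
    and R :: "((nat \<times> 'a set set) \<times> (nat \<times> 'a set set)) set"
    and n :: nat and la :: "'a set set"
  assumes C12: "mon_supercat C"
    and C3: "\<forall>m. findim C m \<and> semisimple C m"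
    and C4_order: "partial_order_on (LamC C) R"
    and C4: "\<forall>m. \<forall>la'\<in>Lam C m. \<forall>S\<in>la'. \<forall>mu\<in>Lam C (Suc m).
               occurs mu (Ind C m S) \<longleftrightarrow> ((m, la'), (Suc m, mu)) \<in> R"
    and lam: "la \<in> Lam C n"
  shows "Sigma_id C n (Jlam C la) =
           module.span (sc C) (\<Union>{Jlam C mu | mu. mu \<in> Lam C (Suc n) \<and> ((n, la), (Suc n, mu)) \<in> R})"
proof -
  interpret mon_supercategory C by (rule mon_supercategory.intro) (fact C12)
  define P where "P = {mu. mu \<in> Lam C (Suc n) \<and> ((n, la), (Suc n, mu)) \<in> R}"
  have "Sigma_id C n (Jlam C la) = span (\<Union>(Jlam C ` P))"
  proof (rule Sigma_id_Jlam[OF _ _ lam])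
    show "findim C (Suc n)" "semisimple C (Suc n)" using C3 by blast+
    show "P \<subseteq> Lam C (Suc n)" unfolding P_def by blast
    show "occurs mu (Ind C n S) \<longleftrightarrow> mu \<in> P" if "S \<in> la" "mu \<in> Lam C (Suc n)" for S mu
      using C4[rule_format, OF lam that] that(2) unfolding P_def by simp
  qed
  moreover have "{Jlam C mu | mu. mu \<in> Lam C (Suc n) \<and> ((n, la), (Suc n, mu)) \<in> R} = Jlam C ` P"
    unfolding P_def Setcompr_eq_image[symmetric] by simp
  ultimately show ?thesis by simp
qed

end
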